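(* Let the control policy be $u_k^*=-K_k\hat x_k$. For a choice of age $\eta_k$ at time $k$ write $e_k(\eta_k)=\sum_{t=1}^{\eta_k}A^{t-1}w_{k-t}$. Define value functions backward by $V^q_{N+1}=0$ and $$V^q_k=\min_{\eta_k\in\{0,\dots,\eta_{k-1}+1\}}\Big\{-\theta_k\eta_k+e_k(\eta_k)^T\Gamma_ke_k(\eta_k)+\mathbb{E}[V^q_{k+1}\mid\mathcal{I}^q_k]\Big\},$$ where $V^q_{k+1}$ depends on $\eta_k$ through the constraint $\eta_{k+1}\le\eta_k+1$. Then the optimal admissible queuing policy (minimizing $\chi$ given $u^*$) is $$\eta_k^*=\operatorname*{arg\,min}_{\eta_k\in\{0,\dots,\eta_{k-1}+1\}}\Big\{-\theta_k\eta_k+c_k+\Big(\sum_{t=1}^{\eta_k}A^{t-1}w_{k-t}\Big)^T\Gamma_k\Big(\sum_{t=1}^{\eta_k}A^{t-1}w_{k-t}\Big)\Big\},$$ where $c_k=\mathbb{E}[V^q_{k+1}\mid\mathcal{I}^q_k]$ (a quantity depending on $\eta_k$) and $\Gamma_k=K_k^T(B^TS_{k+1}B+R_k)K_k$.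
   Context: Let $A\in\mathbb{R}^{n\times n}$, $B\in\mathbb{R}^{n\times m}$ with $(A,B)$ controllable. The plant evolves as $x_{k+1}=Ax_k+Bu_k+w_k$, $k=0,\dots,N$, where $x_0$ is Gaussian with mean $m_0$ and covariance $M_0$, the $w_k\in\mathbb{R}^n$ are independent zero-mean Gaussian vectors with covariance $W_k\succ0$, independent of $x_0$. The age of information is an integer sequence $\eta_0=0$, $\eta_k\in\{0,1,\dots,\eta_{k-1}+1\}$; at time $k$ the latest measurement at the controller is $x_{k-\eta_k}$. Controller information set: $\mathcal{I}^c_k=\{x_{t-\eta_t}:0\le t\le k\}$ (information that the ages carry about the states is neglected); the controller estimate is $\hat x_k=A^{\eta_k}x_{k-\eta_k}+\sum_{t=1}^{\eta_k}A^{t-1}Bu_{k-t}$. Queuing information set: $\mathcal{I}^q_k=\{w_t: t\le k-1\}$; a queuing policy $\pi=\{\eta_0,\dots,\eta_N\}$ is admissible if $\eta_k$ is $\mathcal{I}^q_k$-measurable for all $k$. Weights: $Q_k\succeq0$ ($k=0,\dots,N+1$), $R_k\succ0$, real $\theta_k$. Cost: $$\chi(\pi,\mu)=\mathbb{E}\Big[x_{N+1}^TQ_{N+1}x_{N+1}+\sum_{k=0}^N\big(-\theta_k\eta_k+x_k^TQ_kx_k+u_k^TR_ku_k\big)\Big].$$ Riccati recursion: $S_{N+1}=Q_{N+1}$, $K_k=(R_k+B^TS_{k+1}B)^{-1}B^TS_{k+1}A$, $S_k=Q_k+A^TS_{k+1}A-K_k^T(R_k+B^TS_{k+1}B)K_k$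 for $k=N,\dots,0$. *)

theory Defs
  imports "HOL-Analysis.Analysis" "HOL-Probability.Probability"
begin

text \<open>Matrix power with respect to matrix multiplication (the ring power on
  real^'n^'n would be componentwise, so we define it explicitly).\<close>
primrec mpow :: "real^'n^'n \<Rightarrow> nat \<Rightarrow> real^'n^'n" where
  "mpow A 0 = mat 1"
| "mpow A (Suc k) = A ** mpow A k"

definition sym_psd :: "real^'n^'n \<Rightarrow> bool" where
  "sym_psd C \<longleftrightarrow> transpose C = C \<and> (\<forall>x. 0 \<le> x \<bullet> (C *v x))"

definition sym_pd :: "real^'n^'n \<Rightarrow> bool" where
  "sym_pd C \<longleftrightarrow> transpose C = C \<and> (\<forall>x. x \<noteq> 0 \<longrightarrow> 0 < x \<bullet> (C *v x))"

primrec lin_state :: "real^'n^'n \<Rightarrow> real^'m^'n \<Rightarrow> real^'n \<Rightarrow> (nat \<Rightarrow> real^'m) \<Rightarrow> nat \<Rightarrow> real^'n" where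
  "lin_state A B x us 0 = x"
| "lin_state A B x us (Suc k) = A *v lin_state A B x us k + B *v us k"

definition controllable :: "real^'n^'n \<Rightarrow> real^'m^'n \<Rightarrow> bool" where
  "controllable A B \<longleftrightarrow> (\<forall>x y. \<exists>us T. lin_state A B x us T = y)"

text \<open>ric_back A B Q R N j = S_{N+1-j}.\<close>
primrec ric_back :: "real^'n^'n \<Rightarrow> real^'m^'n \<Rightarrow> (nat \<Rightarrow> real^'n^'n) \<Rightarrow> (nat \<Rightarrow> real^'m^'m)
    \<Rightarrow> nat \<Rightarrow> nat \<Rightarrow> real^'n^'n" where
  "ric_back A B Q R N 0 = Q (Suc N)"
| "ric_back A B Q R N (Suc j) =
     (let k = N - j; S1 = ric_back A B Q R N j;
          G = R k + transpose B ** S1 ** B;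
          K = matrix_inv G ** transpose B ** S1 ** A
      in Q k + transpose A ** S1 ** A - transpose K ** G ** K)"

definition ricS :: "real^'n^'n \<Rightarrow> real^'m^'n \<Rightarrow> (nat \<Rightarrow> real^'n^'n) \<Rightarrow> (nat \<Rightarrow> real^'m^'m)
    \<Rightarrow> nat \<Rightarrow> nat \<Rightarrow> real^'n^'n" where
  "ricS A B Q R N k = ric_back A B Q R N (Suc N - k)"

definition ricK :: "real^'n^'n \<Rightarrow> real^'m^'n \<Rightarrow> (nat \<Rightarrow> real^'n^'n) \<Rightarrow> (nat \<Rightarrow> real^'m^'m)
    \<Rightarrow> nat \<Rightarrow> nat \<Rightarrow> real^'n^'m" where
  "ricK A B Q R N k = matrix_inv (R k + transpose B ** ricS A B Q R N (Suc k) ** B)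
      ** transpose B ** ricS A B Q R N (Suc k) ** A"

definition ricGamma :: "real^'n^'n \<Rightarrow> real^'m^'n \<Rightarrow> (nat \<Rightarrow> real^'n^'n) \<Rightarrow> (nat \<Rightarrow> real^'m^'m)
    \<Rightarrow> nat \<Rightarrow> nat \<Rightarrow> real^'n^'n" where
  "ricGamma A B Q R N k = transpose (ricK A B Q R N k)
      ** (transpose B ** ricS A B Q R N (Suc k) ** B + R k) ** ricK A B Q R N k"

definition gaussian_vec :: "'a measure \<Rightarrow> ('a \<Rightarrow> real^'n) \<Rightarrow> real^'n \<Rightarrow> real^'n^'n \<Rightarrow> bool" where
  "gaussian_vec M X m C \<longleftrightarrow> X \<in> borel_measurable M \<and>
     (\<forall>a. if a \<bullet> (C *v a) = 0
          then (AE \<omega> in M. a \<bullet> X \<omega> = a \<bullet> m)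
          else distributed M lborel (\<lambda>\<omega>. a \<bullet> X \<omega>)
                 (\<lambda>x. ennreal (normal_density (a \<bullet> m) (sqrt (a \<bullet> (C *v a))) x)))"

text \<open>Given the realisation of the ages eta, the initial state x0 and the noise w,
  and the feedback gains K, hist k returns (x_0..x_k, u_0..u_{k-1}) where
  u_j = - K_j xhat_j,
  xhat_j = A^{eta_j} x_{j-eta_j} + sum_{t=1}^{eta_j} A^{t-1} B u_{j-t},
  x_{j+1} = A x_j + B u_j + w_j.\<close>
primrec hist :: "real^'n^'n \<Rightarrow> real^'m^'n \<Rightarrow> (nat \<Rightarrow> real^'n^'m) \<Rightarrow> (nat \<Rightarrow> nat)
    \<Rightarrow> real^'n \<Rightarrow> (nat \<Rightarrow> real^'n) \<Rightarrow> nat \<Rightarrow> (nat \<Rightarrow> real^'n) \<times> (nat \<Rightarrow> real^'m)" where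
  "hist A B K eta x0 w 0 = ((\<lambda>_. x0), (\<lambda>_. 0))"
| "hist A B K eta x0 w (Suc k) =
     (let xs = fst (hist A B K eta x0 w k); us = snd (hist A B K eta x0 w k);
          xh = mpow A (eta k) *v xs (k - eta k)
               + (\<Sum>t\<in>{1..eta k}. (mpow A (t - 1) ** B) *v us (k - t));
          uk = - (K k *v xh)
      in (xs(Suc k := A *v xs k + B *v uk + w k), us(k := uk)))"

definition cl_x :: "real^'n^'n \<Rightarrow> real^'m^'n \<Rightarrow> (nat \<Rightarrow> real^'n^'m) \<Rightarrow> (nat \<Rightarrow> nat)
    \<Rightarrow> real^'n \<Rightarrow> (nat \<Rightarrow> real^'n) \<Rightarrow> nat \<Rightarrow> real^'n" where
  "cl_x A B K eta x0 w k = fst (hist A B K eta x0 w k) k"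

definition cl_u :: "real^'n^'n \<Rightarrow> real^'m^'n \<Rightarrow> (nat \<Rightarrow> real^'n^'m) \<Rightarrow> (nat \<Rightarrow> nat)
    \<Rightarrow> real^'n \<Rightarrow> (nat \<Rightarrow> real^'n) \<Rightarrow> nat \<Rightarrow> real^'m" where
  "cl_u A B K eta x0 w k = snd (hist A B K eta x0 w (Suc k)) k"

definition cl_cost :: "real^'n^'n \<Rightarrow> real^'m^'n \<Rightarrow> (nat \<Rightarrow> real^'n^'m) \<Rightarrow> (nat \<Rightarrow> real^'n^'n)
    \<Rightarrow> (nat \<Rightarrow> real^'m^'m) \<Rightarrow> (nat \<Rightarrow> real) \<Rightarrow> nat \<Rightarrow> (nat \<Rightarrow> nat)
    \<Rightarrow> real^'n \<Rightarrow> (nat \<Rightarrow> real^'n) \<Rightarrow> real" where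
  "cl_cost A B K Q R \<theta> N eta x0 w =
     (let x = cl_x A B K eta x0 w; u = cl_u A B K eta x0 w in
      x (Suc N) \<bullet> (Q (Suc N) *v x (Suc N))
      + (\<Sum>k\<in>{0..N}. - \<theta> k * real (eta k) + x k \<bullet> (Q k *v x k) + u k \<bullet> (R k *v u k)))"

definition Fq :: "'a measure \<Rightarrow> (nat \<Rightarrow> 'a \<Rightarrow> real^'n) \<Rightarrow> nat \<Rightarrow> 'a measure" where
  "Fq M w k = vimage_algebra (space M) (\<lambda>\<omega>. restrict (\<lambda>t. w t \<omega>) {..<k})
       (Pi\<^sub>M {..<k} (\<lambda>_. borel))"

definition admissible :: "'a measure \<Rightarrow> (nat \<Rightarrow> 'a \<Rightarrow> real^'n) \<Rightarrow> nat \<Rightarrow> (nat \<Rightarrow> 'a \<Rightarrow> nat) \<Rightarrow> bool" where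
  "admissible M w N eta \<longleftrightarrow>
     (\<forall>\<omega>\<in>space M. eta 0 \<omega> = 0) \<and>
     (\<forall>k\<in>{1..N}. \<forall>\<omega>\<in>space M. eta k \<omega> \<le> eta (k - 1) \<omega> + 1) \<and>
     (\<forall>k\<le>N. eta k \<in> measurable (Fq M w k) (count_space UNIV))"

definition chi :: "'a measure \<Rightarrow> real^'n^'n \<Rightarrow> real^'m^'n \<Rightarrow> (nat \<Rightarrow> real^'n^'n)
    \<Rightarrow> (nat \<Rightarrow> real^'m^'m) \<Rightarrow> (nat \<Rightarrow> real) \<Rightarrow> nat \<Rightarrow> ('a \<Rightarrow> real^'n)
    \<Rightarrow> (nat \<Rightarrow> 'a \<Rightarrow> real^'n) \<Rightarrow> (nat \<Rightarrow> 'a \<Rightarrow> nat) \<Rightarrow> real" where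
  "chi M A B Q R \<theta> N x0 w eta =
     (\<integral>\<omega>. cl_cost A B (ricK A B Q R N) Q R \<theta> N (\<lambda>k. eta k \<omega>) (x0 \<omega>) (\<lambda>k. w k \<omega>) \<partial>M)"

definition ek :: "real^'n^'n \<Rightarrow> (nat \<Rightarrow> 'a \<Rightarrow> real^'n) \<Rightarrow> nat \<Rightarrow> nat \<Rightarrow> 'a \<Rightarrow> real^'n" where
  "ek A w k e \<omega> = (\<Sum>t\<in>{1..e}. mpow A (t - 1) *v w (k - t) \<omega>)"

text \<open>Vq_back ... j a = V^q_{N+1-j} as a function of the previous age a = eta_{k-1}.\<close>
primrec Vq_back :: "'a measure \<Rightarrow> real^'n^'n \<Rightarrow> real^'m^'n \<Rightarrow> (nat \<Rightarrow> real^'n^'n)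
    \<Rightarrow> (nat \<Rightarrow> real^'m^'m) \<Rightarrow> (nat \<Rightarrow> real) \<Rightarrow> nat \<Rightarrow> (nat \<Rightarrow> 'a \<Rightarrow> real^'n)
    \<Rightarrow> nat \<Rightarrow> nat \<Rightarrow> 'a \<Rightarrow> real" where
  "Vq_back M A B Q R \<theta> N w 0 a \<omega> = 0"
| "Vq_back M A B Q R \<theta> N w (Suc j) a \<omega> =
     (let k = N - j in
      Min ((\<lambda>e. - \<theta> k * real e + ek A w k e \<omega> \<bullet> (ricGamma A B Q R N k *v ek A w k e \<omega>)
                + real_cond_exp M (Fq M w k) (Vq_back M A B Q R \<theta> N w j e) \<omega>) ` {0..a+1}))"

definition Vq :: "'a measure \<Rightarrow> real^'n^'n \<Rightarrow> real^'m^'n \<Rightarrow> (nat \<Rightarrow> real^'n^'n)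
    \<Rightarrow> (nat \<Rightarrow> real^'m^'m) \<Rightarrow> (nat \<Rightarrow> real) \<Rightarrow> nat \<Rightarrow> (nat \<Rightarrow> 'a \<Rightarrow> real^'n)
    \<Rightarrow> nat \<Rightarrow> nat \<Rightarrow> 'a \<Rightarrow> real" where
  "Vq M A B Q R \<theta> N w k = Vq_back M A B Q R \<theta> N w (Suc N - k)"

definition qobj :: "'a measure \<Rightarrow> real^'n^'n \<Rightarrow> real^'m^'n \<Rightarrow> (nat \<Rightarrow> real^'n^'n)
    \<Rightarrow> (nat \<Rightarrow> real^'m^'m) \<Rightarrow> (nat \<Rightarrow> real) \<Rightarrow> nat \<Rightarrow> (nat \<Rightarrow> 'a \<Rightarrow> real^'n)
    \<Rightarrow> nat \<Rightarrow> nat \<Rightarrow> 'a \<Rightarrow> real" where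
  "qobj M A B Q R \<theta> N w k e \<omega> =
     - \<theta> k * real e + real_cond_exp M (Fq M w k) (Vq M A B Q R \<theta> N w (Suc k) e) \<omega>
     + ek A w k e \<omega> \<bullet> (ricGamma A B Q R N k *v ek A w k e \<omega>)"

definition argmin_policy :: "'a measure \<Rightarrow> real^'n^'n \<Rightarrow> real^'m^'n \<Rightarrow> (nat \<Rightarrow> real^'n^'n)
    \<Rightarrow> (nat \<Rightarrow> real^'m^'m) \<Rightarrow> (nat \<Rightarrow> real) \<Rightarrow> nat \<Rightarrow> (nat \<Rightarrow> 'a \<Rightarrow> real^'n)
    \<Rightarrow> (nat \<Rightarrow> 'a \<Rightarrow> nat) \<Rightarrow> bool" where
  "argmin_policy M A B Q R \<theta> N w eta \<longleftrightarrow>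
     (\<forall>\<omega>\<in>space M. eta 0 \<omega> = 0) \<and>
     (\<forall>k\<in>{1..N}. \<forall>\<omega>\<in>space M. eta k \<omega> \<le> eta (k - 1) \<omega> + 1 \<and>
        (\<forall>e\<le>eta (k - 1) \<omega> + 1.
           qobj M A B Q R \<theta> N w k (eta k \<omega>) \<omega> \<le> qobj M A B Q R \<theta> N w k e \<omega>))"

end

theory Submission
  imports Defs
begin

text \<open>Completing squares along the Riccati recursion turns the cost of the certainty equivalent
  controller \<open>u\<^sub>k = -K\<^sub>k xhat\<^sub>k\<close> into
  \<open>x\<^sub>0\<^sup>T S\<^sub>0 x\<^sub>0 + \<Sum> w\<^sub>k\<^sup>T S\<^sub>k\<^sub>+\<^sub>1 w\<^sub>k + \<Sum> (-\<theta>\<^sub>k \<eta>\<^sub>k + e\<^sub>k\<^sup>T \<Gamma>\<^sub>k e\<^sub>k) + 2 \<Sum> w\<^sub>k\<^sup>T S\<^sub>k\<^sub>+\<^sub>1 (A x\<^sub>k + B u\<^sub>k)\<close>,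
  where \<open>e\<^sub>k = e\<^sub>k(\<eta>\<^sub>k)\<close> is the estimation error caused by the age.
  The first two sums do not depend on the queuing policy, and the cross terms have mean zero
  because \<open>x\<^sub>k\<close> and \<open>u\<^sub>k\<close> are functions of \<open>x\<^sub>0, w\<^sub>0, \<dots>, w\<^sub>k\<^sub>-\<^sub>1\<close>, of which the centred \<open>w\<^sub>k\<close> is
  independent. What is left is a finite horizon control problem for the ages alone, whose stage
  costs depend on the past noise only. Backward induction with the tower property shows that
  \<open>E V\<^sup>q\<^sub>1\<close> bounds the expected cost to go of every admissible policy from below, with equality
  for a policy attaining the minimum at every stage; such a policy exists and is admissible
  because each stage minimises finitely many \<open>I\<^sup>q\<^sub>k\<close>-measurable quantities.\<close>

section \<open>Quadratic forms and the Riccati recursion\<close>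

lemma inner_matrix_vector_transpose: "(x::real^'n) \<bullet> (M *v y) = (transpose M *v x) \<bullet> y"
  by (metis dot_lmul_matrix inner_commute transpose_matrix_vector transpose_transpose vector_transpose_matrix)

lemma inner_symmetric_matrix_commute: "transpose (S::real^'n^'n) = S \<Longrightarrow> x \<bullet> (S *v y) = y \<bullet> (S *v x)"
  by (metis inner_commute inner_matrix_vector_transpose)

lemma inner_transpose_mult_mult:
  "(x::real^'n) \<bullet> ((transpose C ** S ** D) *v y) = (C *v x) \<bullet> (S *v (D *v y))"
  by (simp only: matrix_vector_mul_assoc[symmetric] matrix_mul_assoc inner_matrix_vector_transpose[of x]
      transpose_transpose)

lemma transpose_add: "transpose ((A::real^'n^'m) + B) = transpose A + transpose B"
  by (simp add: transpose_def vec_eq_iff)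

lemma transpose_diff: "transpose ((A::real^'n^'m) - B) = transpose A - transpose B"
  by (simp add: transpose_def vec_eq_iff)

lemma sym_psd_nonneg: "sym_psd S \<Longrightarrow> 0 \<le> x \<bullet> (S *v x)"
  unfolding sym_psd_def by blast

lemma sym_pd_nonneg: "sym_pd S \<Longrightarrow> 0 \<le> x \<bullet> (S *v x)"
  unfolding sym_pd_def by (cases "x = 0") (auto intro: less_imp_le)

lemma invertible_if_pos_def:
  assumes "\<And>x. x \<noteq> 0 \<Longrightarrow> 0 < x \<bullet> ((G::real^'n^'n) *v x)"
  shows "invertible G"
proof -
  have "\<forall>x. G *v x = 0 \<longrightarrow> x = 0" using assms by (metis inner_zero_right less_irrefl)
  then show ?thesis using matrix_left_invertible_ker invertible_left_inverse by blast
qed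

lemma matrix_mul_matrix_inv_right:
  "invertible (G::real^'n^'n) \<Longrightarrow> G ** matrix_inv G = mat 1"
  unfolding invertible_def matrix_inv_def by (rule someI2_ex) auto

lemma sym_pd_add_congruence:
  assumes "sym_pd R" and "sym_psd S"
  shows "sym_pd (R + transpose B ** S ** B)"
proof -
  have "0 < x \<bullet> ((R + transpose B ** S ** B) *v x)" if "x \<noteq> 0" for x
  proof -
    have "0 < x \<bullet> (R *v x)" using assms(1) that unfolding sym_pd_def by blast
    moreover have "0 \<le> (B *v x) \<bullet> (S *v (B *v x))" using assms(2) by (rule sym_psd_nonneg)
    ultimately show ?thesis
      by (simp add: matrix_vector_mult_add_rdistrib inner_add_right inner_transpose_mult_mult)
  qed
  moreover have "transpose (R + transpose B ** S ** B) = R + transpose B ** S ** B"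
    using assms unfolding sym_pd_def sym_psd_def
    by (simp add: transpose_add matrix_transpose_mul matrix_mul_assoc)
  ultimately show ?thesis unfolding sym_pd_def by blast
qed

lemma riccati_completion_of_squares:
  fixes A :: "real^'n^'n" and B :: "real^'m^'n" and S' Q S :: "real^'n^'n" and R G :: "real^'m^'m"
    and K :: "real^'n^'m"
  assumes S'_sym: "transpose S' = S'" and R_sym: "transpose R = R"
    and G: "G = R + transpose B ** S' ** B" and G_inv: "G ** matrix_inv G = mat 1"
    and K: "K = matrix_inv G ** transpose B ** S' ** A"
    and S: "S = Q + transpose A ** S' ** A - transpose K ** G ** K"
  shows "(A *v x + B *v u + v) \<bullet> (S' *v (A *v x + B *v u + v)) + x \<bullet> (Q *v x) + u \<bullet> (R *v u)
       = x \<bullet> (S *v x) + (u + K *v x) \<bullet> (G *v (u + K *v x)) + v \<bullet> (S' *v v)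
         + 2 * (v \<bullet> (S' *v (A *v x + B *v u)))"
proof -
  have G_sym: "transpose G = G"
    using G S'_sym R_sym by (simp add: matrix_transpose_mul transpose_add matrix_mul_assoc)
  have GK: "G ** K = transpose B ** S' ** A"
    by (metis K G_inv matrix_mul_assoc matrix_mul_lid)
  have BA: "(B *v u) \<bullet> (S' *v (A *v x)) = u \<bullet> (G *v (K *v x))"
    by (simp only: matrix_vector_mul_assoc GK inner_transpose_mult_mult)
  have AB: "(A *v x) \<bullet> (S' *v (B *v u)) = u \<bullet> (G *v (K *v x))"
    using BA inner_symmetric_matrix_commute[OF S'_sym] by metis
  have KG: "(K *v x) \<bullet> (G *v u) = u \<bullet> (G *v (K *v x))"
    using inner_symmetric_matrix_commute[OF G_sym] by metis
  have G_form: "u \<bullet> (G *v u) = u \<bullet> (R *v u) + (B *v u) \<bullet> (S' *v (B *v u))"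
    by (simp only: G matrix_vector_mult_add_rdistrib inner_add_right inner_transpose_mult_mult)
  have S_form: "x \<bullet> (S *v x) = x \<bullet> (Q *v x) + (A *v x) \<bullet> (S' *v (A *v x)) - (K *v x) \<bullet> (G *v (K *v x))"
    by (simp only: S matrix_vector_mult_add_rdistrib matrix_vector_mult_diff_rdistrib inner_add_right
        inner_diff_right inner_transpose_mult_mult)
  have noise: "v \<bullet> (S' *v (A *v x)) = (A *v x) \<bullet> (S' *v v)" "v \<bullet> (S' *v (B *v u)) = (B *v u) \<bullet> (S' *v v)"
    using inner_symmetric_matrix_commute[OF S'_sym] by metis+
  show ?thesis
    by (simp add: inner_add_left BA AB KG G_form S_form noise algebra_simps)
qed

lemma ricS_Suc_N: "ricS A B Q R N (Suc N) = Q (Suc N)"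
  unfolding ricS_def by simp

lemma ricS_step:
  assumes "k \<le> N"
  shows "ricS A B Q R N k = Q k + transpose A ** ricS A B Q R N (Suc k) ** A
     - transpose (ricK A B Q R N k) ** (R k + transpose B ** ricS A B Q R N (Suc k) ** B) ** ricK A B Q R N k"
proof -
  have "Suc N - k = Suc (N - k)" "N - (N - k) = k" using assms by simp_all
  then show ?thesis unfolding ricS_def ricK_def by (simp add: Let_def)
qed

lemma riccati_step_completion:
  assumes S': "sym_psd (ricS A B Q R N (Suc k))" and R: "sym_pd (R k)" and kN: "k \<le> N"
  defines "G \<equiv> R k + transpose B ** ricS A B Q R N (Suc k) ** B"
  shows "(A *v x + B *v u + v) \<bullet> (ricS A B Q R N (Suc k) *v (A *v x + B *v u + v))
           + x \<bullet> (Q k *v x) + u \<bullet> (R k *v u)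
       = x \<bullet> (ricS A B Q R N k *v x) + (u + ricK A B Q R N k *v x) \<bullet> (G *v (u + ricK A B Q R N k *v x))
         + v \<bullet> (ricS A B Q R N (Suc k) *v v) + 2 * (v \<bullet> (ricS A B Q R N (Suc k) *v (A *v x + B *v u)))"
proof (rule riccati_completion_of_squares)
  show "transpose (ricS A B Q R N (Suc k)) = ricS A B Q R N (Suc k)" "transpose (R k) = R k"
    using S' R unfolding sym_psd_def sym_pd_def by simp_all
  have "sym_pd G" unfolding G_def using R S' by (rule sym_pd_add_congruence)
  then show "G ** matrix_inv G = mat 1"
    unfolding sym_pd_def by (blast intro: matrix_mul_matrix_inv_right invertible_if_pos_def)
  show "ricS A B Q R N k = Q k + transpose A ** ricS A B Q R N (Suc k) ** A
      - transpose (ricK A B Q R N k) ** G ** ricK A B Q R N k"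
    unfolding G_def using kN by (rule ricS_step)
qed (simp_all add: G_def ricK_def)

lemma ricS_sym_psd:
  assumes Q: "\<And>k. k \<le> Suc N \<Longrightarrow> sym_psd (Q k)" and R: "\<And>k. k \<le> N \<Longrightarrow> sym_pd (R k)"
  shows "k \<le> Suc N \<Longrightarrow> sym_psd (ricS A B Q R N k)"
proof (induction k rule: inc_induct)
  case base
  then show ?case using Q by (simp add: ricS_Suc_N)
next
  case (step k)
  let ?S = "ricS A B Q R N k" and ?S' = "ricS A B Q R N (Suc k)" and ?K = "ricK A B Q R N k"
  have kN: "k \<le> N" using step by simp
  have S': "sym_psd ?S'" using step by simp
  have "transpose ?S = ?S"
    using Q[of k] R[OF kN] S' kN unfolding sym_psd_def sym_pd_def
    by (simp add: ricS_step[OF kN] transpose_add transpose_diff matrix_transpose_mul matrix_mul_assoc)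
  moreover have "0 \<le> x \<bullet> (?S *v x)" for x
  proof -
    let ?u = "- (?K *v x)"
    have "0 \<le> (A *v x + B *v ?u + 0) \<bullet> (?S' *v (A *v x + B *v ?u + 0)) + x \<bullet> (Q k *v x) + ?u \<bullet> (R k *v ?u)"
      using Q[of k] kN
      by (intro add_nonneg_nonneg sym_psd_nonneg[OF S'] sym_psd_nonneg sym_pd_nonneg[OF R[OF kN]]) simp_all
    then show ?thesis
      unfolding riccati_step_completion[OF S' R[OF kN] kN] by simp
  qed
  ultimately show ?case unfolding sym_psd_def by blast
qed

section \<open>The closed loop\<close>

lemma hist_prefix:
  "j \<le> k \<Longrightarrow> fst (hist A B K eta x0 w (k + d)) j = fst (hist A B K eta x0 w k) j"
  "j < k \<Longrightarrow> snd (hist A B K eta x0 w (k + d)) j = snd (hist A B K eta x0 w k) j"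
  by (induction d) (auto simp: Let_def)

lemma fst_hist_eq_cl_x: "j \<le> k \<Longrightarrow> fst (hist A B K eta x0 w k) j = cl_x A B K eta x0 w j"
  unfolding cl_x_def using hist_prefix(1)[of j j A B K eta x0 w "k - j"] by simp

lemma snd_hist_eq_cl_u: "j < k \<Longrightarrow> snd (hist A B K eta x0 w k) j = cl_u A B K eta x0 w j"
  unfolding cl_u_def using hist_prefix(2)[of j "Suc j" A B K eta x0 w "k - Suc j"] by simp

lemma cl_x_0: "cl_x A B K eta x0 w 0 = x0"
  unfolding cl_x_def by simp

lemma cl_x_Suc: "cl_x A B K eta x0 w (Suc k) = A *v cl_x A B K eta x0 w k + B *v cl_u A B K eta x0 w k + w k"
  unfolding cl_x_def cl_u_def by (simp add: Let_def)

definition cl_xhat :: "real^'n^'n \<Rightarrow> real^'m^'n \<Rightarrow> (nat \<Rightarrow> real^'n^'m) \<Rightarrow> (nat \<Rightarrow> nat)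
    \<Rightarrow> real^'n \<Rightarrow> (nat \<Rightarrow> real^'n) \<Rightarrow> nat \<Rightarrow> real^'n" where
  "cl_xhat A B K eta x0 w k = mpow A (eta k) *v cl_x A B K eta x0 w (k - eta k)
      + (\<Sum>t\<in>{1..eta k}. (mpow A (t - 1) ** B) *v cl_u A B K eta x0 w (k - t))"

definition est_error :: "real^'n^'n \<Rightarrow> (nat \<Rightarrow> real^'n) \<Rightarrow> nat \<Rightarrow> nat \<Rightarrow> real^'n" where
  "est_error A w k e = (\<Sum>t\<in>{1..e}. mpow A (t - 1) *v w (k - t))"

lemma ek_eq_est_error: "ek A w k e \<omega> = est_error A (\<lambda>t. w t \<omega>) k e"
  unfolding ek_def est_error_def ..

lemma cl_u_eq_feedback:
  assumes "eta k \<le> k"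
  shows "cl_u A B K eta x0 w k = - (K k *v cl_xhat A B K eta x0 w k)"
proof -
  have "(\<Sum>t\<in>{1..eta k}. (mpow A (t - 1) ** B) *v snd (hist A B K eta x0 w k) (k - t))
      = (\<Sum>t\<in>{1..eta k}. (mpow A (t - 1) ** B) *v cl_u A B K eta x0 w (k - t))"
    using assms by (intro sum.cong refl arg_cong[where f="(*v) _"] snd_hist_eq_cl_u) auto
  then show ?thesis
    by (simp add: cl_u_def cl_xhat_def Let_def fst_hist_eq_cl_x)
qed

lemma mpow_commute: "mpow A n ** A = A ** mpow A n"
  by (induction n) (simp_all, metis matrix_mul_assoc)

lemma cl_x_unroll:
  "j \<le> k \<Longrightarrow> cl_x A B K eta x0 w k = mpow A j *v cl_x A B K eta x0 w (k - j)
     + (\<Sum>t\<in>{1..j}. mpow A (t - 1) *v (B *v cl_u A B K eta x0 w (k - t) + w (k - t)))"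
proof (induction j)
  case 0
  then show ?case by simp
next
  case (Suc j)
  have "k - j = Suc (k - Suc j)" using Suc.prems by simp
  then have "mpow A j *v cl_x A B K eta x0 w (k - j)
     = mpow A (Suc j) *v cl_x A B K eta x0 w (k - Suc j)
       + mpow A j *v (B *v cl_u A B K eta x0 w (k - Suc j) + w (k - Suc j))"
    by (simp add: cl_x_Suc matrix_vector_right_distrib matrix_vector_mul_assoc mpow_commute add.assoc)
  then show ?case using Suc by (simp add: add.assoc)
qed

lemma cl_x_minus_cl_xhat:
  assumes "eta k \<le> k"
  shows "cl_x A B K eta x0 w k - cl_xhat A B K eta x0 w k = est_error A w k (eta k)"
  unfolding cl_x_unroll[OF assms] cl_xhat_def est_error_def
  by (simp add: matrix_vector_right_distrib sum.distrib matrix_vector_mul_assoc[symmetric])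

text \<open>Under the certainty equivalent feedback the residual square of the completion is the
  estimation error weighted by \<open>\<Gamma>\<^sub>k\<close>.\<close>
lemma cl_stage_identity:
  fixes A :: "real^'n^'n" and B :: "real^'m^'n" and x0 :: "real^'n" and w :: "nat \<Rightarrow> real^'n"
    and eta :: "nat \<Rightarrow> nat"
  assumes S': "sym_psd (ricS A B Q R N (Suc k))" and R: "sym_pd (R k)"
    and kN: "k \<le> N" and eta: "eta k \<le> k"
  defines "x \<equiv> cl_x A B (ricK A B Q R N) eta x0 w" and "u \<equiv> cl_u A B (ricK A B Q R N) eta x0 w"
    and "e \<equiv> est_error A w k (eta k)"
  shows "x (Suc k) \<bullet> (ricS A B Q R N (Suc k) *v x (Suc k)) + x k \<bullet> (Q k *v x k) + u k \<bullet> (R k *v u k)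
    = x k \<bullet> (ricS A B Q R N k *v x k) + e \<bullet> (ricGamma A B Q R N k *v e)
      + w k \<bullet> (ricS A B Q R N (Suc k) *v w k)
      + 2 * (w k \<bullet> (ricS A B Q R N (Suc k) *v (A *v x k + B *v u k)))"
proof -
  let ?K = "ricK A B Q R N k" and ?G = "R k + transpose B ** ricS A B Q R N (Suc k) ** B"
  have "u k + ?K *v x k = ?K *v e"
    using cl_x_minus_cl_xhat[of eta k, OF eta] cl_u_eq_feedback[of eta k, OF eta]
    unfolding x_def u_def e_def by (metis add.commute diff_conv_add_uminus matrix_vector_mult_diff_distrib)
  moreover have "(?K *v e) \<bullet> (?G *v (?K *v e)) = e \<bullet> (ricGamma A B Q R N k *v e)"
    unfolding ricGamma_def by (simp only: inner_transpose_mult_mult add.commute)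
  moreover have "x (Suc k) = A *v x k + B *v u k + w k"
    unfolding x_def u_def by (rule cl_x_Suc)
  ultimately show ?thesis
    using riccati_step_completion[OF S' R kN, where x="x k" and u="u k" and v="w k"] kN by simp
qed

lemma cl_cost_decomposition:
  fixes A :: "real^'n^'n" and B :: "real^'m^'n" and x0 :: "real^'n" and w :: "nat \<Rightarrow> real^'n"
    and eta :: "nat \<Rightarrow> nat"
  assumes Q: "\<And>k. k \<le> Suc N \<Longrightarrow> sym_psd (Q k)" and R: "\<And>k. k \<le> N \<Longrightarrow> sym_pd (R k)"
    and eta: "\<And>k. k \<le> N \<Longrightarrow> eta k \<le> k"
  defines "x \<equiv> cl_x A B (ricK A B Q R N) eta x0 w" and "u \<equiv> cl_u A B (ricK A B Q R N) eta x0 w"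
  shows "cl_cost A B (ricK A B Q R N) Q R \<theta> N eta x0 w
    = x0 \<bullet> (ricS A B Q R N 0 *v x0)
      + (\<Sum>k\<in>{0..N}. - \<theta> k * real (eta k)
          + est_error A w k (eta k) \<bullet> (ricGamma A B Q R N k *v est_error A w k (eta k))
          + w k \<bullet> (ricS A B Q R N (Suc k) *v w k)
          + 2 * (w k \<bullet> (ricS A B Q R N (Suc k) *v (A *v x k + B *v u k))))"
proof -
  define V where "V k = x k \<bullet> (ricS A B Q R N k *v x k)" for k
  define T where "T k = est_error A w k (eta k) \<bullet> (ricGamma A B Q R N k *v est_error A w k (eta k))
          + w k \<bullet> (ricS A B Q R N (Suc k) *v w k)
          + 2 * (w k \<bullet> (ricS A B Q R N (Suc k) *v (A *v x k + B *v u k)))" for k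
  have stage: "x k \<bullet> (Q k *v x k) + u k \<bullet> (R k *v u k) = (V k - V (Suc k)) + T k" if "k \<in> {0..N}" for k
  proof -
    have "sym_psd (ricS A B Q R N (Suc k))" "sym_pd (R k)" "k \<le> N" "eta k \<le> k"
      using that Q R eta by (auto intro: ricS_sym_psd)
    from cl_stage_identity[where eta=eta, OF this, of x0 w]
    show ?thesis unfolding V_def T_def x_def u_def by linarith
  qed
  have "cl_cost A B (ricK A B Q R N) Q R \<theta> N eta x0 w
      = V (Suc N) + (\<Sum>k\<in>{0..N}. - \<theta> k * real (eta k) + (x k \<bullet> (Q k *v x k) + u k \<bullet> (R k *v u k)))"
    unfolding cl_cost_def V_def x_def u_def by (simp add: ricS_Suc_N Let_def algebra_simps)
  also have "\<dots> = V (Suc N) + (\<Sum>k\<in>{0..N}. (- \<theta> k * real (eta k) + T k) + (V k - V (Suc k)))"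
    using stage by (intro arg_cong[where f="(+) _"] sum.cong) simp_all
  also have "\<dots> = V 0 + (\<Sum>k\<in>{0..N}. - \<theta> k * real (eta k) + T k)"
    by (simp add: sum.distrib atLeast0AtMost sum_telescope)
  finally show ?thesis
    unfolding T_def V_def x_def cl_x_0 by (simp add: algebra_simps)
qed

section \<open>Square integrable random variables\<close>

definition square_integrable :: "'a measure \<Rightarrow> 'a measure \<Rightarrow> ('a \<Rightarrow> real) \<Rightarrow> bool" where
  "square_integrable M F f \<longleftrightarrow> f \<in> borel_measurable F \<and> integrable M (\<lambda>x. (f x)^2)"

definition vec_square_integrable :: "'a measure \<Rightarrow> 'a measure \<Rightarrow> ('a \<Rightarrow> real^'n) \<Rightarrow> bool" where
  "vec_square_integrable M F X \<longleftrightarrow> (\<forall>i. square_integrable M F (\<lambda>x. X x $ i))"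

lemma subalgebra_refl: "subalgebra M M"
  unfolding subalgebra_def by simp

lemma vec_nth_measurable: "(X :: 'a \<Rightarrow> real^'n) \<in> borel_measurable F \<Longrightarrow> (\<lambda>x. X x $ i) \<in> borel_measurable F"
  using borel_measurable_euclidean_space[of X F] by (auto simp: Basis_vec_def inner_axis)

lemma borel_measurable_matrix_vector_mult [measurable]:
  assumes "(X :: 'a \<Rightarrow> real^'n) \<in> borel_measurable F"
  shows "(\<lambda>x. (C::real^'n^'m) *v X x) \<in> borel_measurable F"
proof -
  have "(\<lambda>x. (C *v X x) \<bullet> axis i 1) \<in> borel_measurable F" for i
    unfolding inner_axis matrix_vector_mult_def using vec_nth_measurable[OF assms] by simp
  then show ?thesis
    by (subst borel_measurable_euclidean_space) (auto simp: Basis_vec_def)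
qed

lemma vec_square_integrable_measurable: "vec_square_integrable M F X \<Longrightarrow> X \<in> borel_measurable F"
  unfolding vec_square_integrable_def square_integrable_def
  by (subst borel_measurable_euclidean_space) (auto simp: Basis_vec_def inner_axis)

lemma vec_square_integrable_iff:
  "vec_square_integrable M F X \<longleftrightarrow> X \<in> borel_measurable F \<and> (\<forall>i. integrable M (\<lambda>x. (X x $ i)^2))"
  using vec_square_integrable_measurable vec_nth_measurable
  unfolding vec_square_integrable_def square_integrable_def by blast

lemma mult_abs_le_sum_squares: "\<bar>a * b\<bar> \<le> a^2 + b^2" for a b :: real
proof -
  have "0 \<le> (\<bar>a\<bar> - \<bar>b\<bar>)^2" by simp
  then have "2 * (\<bar>a\<bar> * \<bar>b\<bar>) \<le> a^2 + b^2" by (simp add: power2_eq_square algebra_simps)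
  moreover have "0 \<le> \<bar>a\<bar> * \<bar>b\<bar>" by simp
  ultimately have "\<bar>a\<bar> * \<bar>b\<bar> \<le> a^2 + b^2" by linarith
  then show ?thesis by (simp add: abs_mult)
qed

context prob_space
begin

lemma square_integrable_borel_measurable:
  "subalgebra M F \<Longrightarrow> square_integrable M F f \<Longrightarrow> f \<in> borel_measurable M"
  unfolding square_integrable_def using measurable_from_subalg by blast

lemma square_integrable_integrable:
  "subalgebra M F \<Longrightarrow> square_integrable M F f \<Longrightarrow> integrable M f"
  using square_integrable_imp_integrable square_integrable_borel_measurable
  unfolding square_integrable_def by blast

lemma square_integrable_const: "subalgebra M F \<Longrightarrow> square_integrable M F (\<lambda>_. c)"
  unfolding square_integrable_def by simp

lemma square_integrable_cmult: "square_integrable M F f \<Longrightarrow> square_integrable M F (\<lambda>x. c * f x)"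
  unfolding square_integrable_def by (auto simp: power_mult_distrib)

lemma integrable_mult_square_integrable:
  assumes F: "subalgebra M F" and f: "square_integrable M F f" and g: "square_integrable M F g"
  shows "integrable M (\<lambda>x. f x * g x)"
proof (rule Bochner_Integration.integrable_bound)
  show "integrable M (\<lambda>x. (f x)^2 + (g x)^2)" using f g unfolding square_integrable_def by auto
  show "(\<lambda>x. f x * g x) \<in> borel_measurable M"
    using square_integrable_borel_measurable[OF F] f g by simp
  show "AE x in M. norm (f x * g x) \<le> norm ((f x)^2 + (g x)^2)"
    by (simp add: mult_abs_le_sum_squares)
qed

lemma square_integrable_add:
  assumes F: "subalgebra M F" and f: "square_integrable M F f" and g: "square_integrable M F g"
  shows "square_integrable M F (\<lambda>x. f x + g x)"
proof -
  have "integrable M (\<lambda>x. (f x)^2 + (g x)^2 + 2 * (f x * g x))"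
    using f g integrable_mult_square_integrable[OF F f g] unfolding square_integrable_def by auto
  then show ?thesis
    using f g unfolding square_integrable_def by (simp add: power2_sum mult.assoc borel_measurable_add)
qed

lemma square_integrable_sum:
  "subalgebra M F \<Longrightarrow> (\<And>i. i \<in> I \<Longrightarrow> square_integrable M F (f i))
    \<Longrightarrow> square_integrable M F (\<lambda>x. \<Sum>i\<in>I. f i x)"
  by (induction I rule: infinite_finite_induct) (auto intro: square_integrable_const square_integrable_add)

lemma square_integrable_select:
  fixes eta :: "'a \<Rightarrow> nat"
  assumes F: "subalgebra M F" and eta: "eta \<in> measurable F (count_space UNIV)"
    and bound: "\<And>x. x \<in> space M \<Longrightarrow> eta x \<le> b" and f: "\<And>n. n \<le> b \<Longrightarrow> square_integrable M F (f n)"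
  shows "square_integrable M F (\<lambda>x. f (eta x) x)"
proof -
  have space: "space F = space M" using F unfolding subalgebra_def by simp
  have "f (min n b) \<in> borel_measurable F" for n
    using f[of "min n b"] unfolding square_integrable_def by simp
  then have "(\<lambda>x. f (min (eta x) b) x) \<in> borel_measurable F"
    by (rule measurable_compose_countable[where f="\<lambda>n. f (min n b)", OF _ eta])
  moreover have "x \<in> space F \<Longrightarrow> f (min (eta x) b) x = f (eta x) x" for x
    using bound space by (simp add: min_def)
  ultimately have meas: "(\<lambda>x. f (eta x) x) \<in> borel_measurable F"
    by (subst measurable_cong[where g="\<lambda>x. f (min (eta x) b) x"]) auto
  have "integrable M (\<lambda>x. (f (eta x) x)^2)"
  proof (rule Bochner_Integration.integrable_bound)
    show "integrable M (\<lambda>x. \<Sum>n\<le>b. (f n x)^2)"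
      using f unfolding square_integrable_def by auto
    show "(\<lambda>x. (f (eta x) x)^2) \<in> borel_measurable M"
      using measurable_from_subalg[OF F meas] by measurable
    have "(f (eta x) x)^2 \<le> (\<Sum>n\<le>b. (f n x)^2)" if "x \<in> space M" for x
      by (rule member_le_sum) (use bound that in auto)
    then show "AE x in M. norm ((f (eta x) x)^2) \<le> norm (\<Sum>n\<le>b. (f n x)^2)"
      by (intro AE_I2) (simp add: sum_nonneg)
  qed
  with meas show ?thesis unfolding square_integrable_def by simp
qed

lemma vec_square_integrable_const: "subalgebra M F \<Longrightarrow> vec_square_integrable M F (\<lambda>_. c)"
  unfolding vec_square_integrable_def by (simp add: square_integrable_const)

lemma vec_square_integrable_add:
  "subalgebra M F \<Longrightarrow> vec_square_integrable M F X \<Longrightarrow> vec_square_integrable M F Y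
    \<Longrightarrow> vec_square_integrable M F (\<lambda>x. X x + Y x)"
  unfolding vec_square_integrable_def by (simp add: square_integrable_add)

lemma vec_square_integrable_uminus:
  "vec_square_integrable M F X \<Longrightarrow> vec_square_integrable M F (\<lambda>x. - X x)"
  unfolding vec_square_integrable_def using square_integrable_cmult[of F _ "-1"] by simp

lemma vec_square_integrable_matrix_vector_mult:
  "subalgebra M F \<Longrightarrow> vec_square_integrable M F X \<Longrightarrow> vec_square_integrable M F (\<lambda>x. C *v X x)"
  unfolding vec_square_integrable_def matrix_vector_mult_def
  by (auto intro!: square_integrable_sum square_integrable_cmult)

lemma vec_square_integrable_sum:
  "subalgebra M F \<Longrightarrow> (\<And>i. i \<in> I \<Longrightarrow> vec_square_integrable M F (f i))
    \<Longrightarrow> vec_square_integrable M F (\<lambda>x. \<Sum>i\<in>I. f i x)"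
  unfolding vec_square_integrable_def by (auto simp: sum_component intro!: square_integrable_sum)

lemma vec_square_integrable_select:
  fixes eta :: "'a \<Rightarrow> nat"
  assumes "subalgebra M F" and "eta \<in> measurable F (count_space UNIV)"
    and "\<And>x. x \<in> space M \<Longrightarrow> eta x \<le> b" and "\<And>n. n \<le> b \<Longrightarrow> vec_square_integrable M F (f n)"
  shows "vec_square_integrable M F (\<lambda>x. f (eta x) x)"
  unfolding vec_square_integrable_def
proof
  fix i
  show "square_integrable M F (\<lambda>x. f (eta x) x $ i)"
    using square_integrable_select[OF assms(1-3), of "\<lambda>n x. f n x $ i"] assms(4)
    unfolding vec_square_integrable_def by blast
qed

lemma integrable_inner_vec_square_integrable:
  "subalgebra M F \<Longrightarrow> vec_square_integrable M F X \<Longrightarrow> vec_square_integrable M F Y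
    \<Longrightarrow> integrable M (\<lambda>x. X x \<bullet> Y x)"
  unfolding inner_vec_def vec_square_integrable_def
  by (auto intro!: Bochner_Integration.integrable_sum integrable_mult_square_integrable)

lemma integrable_quadratic_form:
  "vec_square_integrable M M X \<Longrightarrow> integrable M (\<lambda>x. X x \<bullet> (C *v X x))"
  using integrable_inner_vec_square_integrable[OF subalgebra_refl]
    vec_square_integrable_matrix_vector_mult[OF subalgebra_refl] by blast

end

section \<open>Gaussian vectors\<close>

lemma gaussian_vec_component_cases:
  assumes X: "gaussian_vec M X m C" and C: "\<And>a. 0 \<le> a \<bullet> (C *v a)"
  obtains "AE \<omega> in M. X \<omega> $ i = m $ i"
  | \<sigma> where "0 < \<sigma>" "distributed M lborel (\<lambda>\<omega>. X \<omega> $ i) (\<lambda>x. ennreal (normal_density (m $ i) \<sigma> x))"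
proof -
  define a :: "real^'b" where "a = axis i 1"
  have a: "a \<bullet> v = v $ i" for v unfolding a_def by (simp add: inner_axis')
  have "if a \<bullet> (C *v a) = 0 then (AE \<omega> in M. a \<bullet> X \<omega> = a \<bullet> m)
      else distributed M lborel (\<lambda>\<omega>. a \<bullet> X \<omega>)
        (\<lambda>x. ennreal (normal_density (a \<bullet> m) (sqrt (a \<bullet> (C *v a))) x))"
    using X unfolding gaussian_vec_def by blast
  then have law: "if (C *v a) $ i = 0 then (AE \<omega> in M. X \<omega> $ i = m $ i)
      else distributed M lborel (\<lambda>\<omega>. X \<omega> $ i)
        (\<lambda>x. ennreal (normal_density (m $ i) (sqrt ((C *v a) $ i)) x))"
    by (simp only: a)
  show thesis
  proof (cases "(C *v a) $ i = 0")
    case True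
    then show thesis using law that(1) by simp
  next
    case False
    then have "0 < sqrt ((C *v a) $ i)" using C[of a] by (simp add: a)
    with law False show thesis by (intro that(2)) simp_all
  qed
qed

lemma normal_density_square_integrable:
  assumes "0 < (\<sigma>::real)"
  shows "integrable lborel (\<lambda>x. normal_density \<mu> \<sigma> x * x^2)"
proof -
  have "integrable lborel (\<lambda>x. normal_density \<mu> \<sigma> x * (x - \<mu>)^k)" for k
    using integrable_normal_moment[OF assms] .
  from this[of 2] this[of 1] this[of 0]
  have "integrable lborel (\<lambda>x. normal_density \<mu> \<sigma> x * (x - \<mu>)^2
      + 2 * \<mu> * (normal_density \<mu> \<sigma> x * (x - \<mu>)^1) + \<mu>^2 * (normal_density \<mu> \<sigma> x * (x - \<mu>)^0))"
    by (intro Bochner_Integration.integrable_add Bochner_Integration.integrable_mult_right)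
  then show ?thesis
    by (rule back_subst[where P="integrable lborel"]) (auto simp: power2_eq_square algebra_simps)
qed

lemma (in prob_space) gaussian_vec_square_integrable:
  assumes X: "gaussian_vec M X m C" and C: "\<And>a. 0 \<le> a \<bullet> (C *v a)"
  shows "vec_square_integrable M M X"
  unfolding vec_square_integrable_iff
proof (intro conjI allI)
  show meas: "X \<in> borel_measurable M" using X unfolding gaussian_vec_def by blast
  fix i
  from X C show "integrable M (\<lambda>x. (X x $ i)^2)"
  proof (cases rule: gaussian_vec_component_cases[where i=i])
    case 1
    then have "AE \<omega> in M. (X \<omega> $ i)^2 = (m $ i)^2" by auto
    then show ?thesis
      using vec_nth_measurable[OF meas] by (subst integrable_cong_AE[where g="\<lambda>_. (m $ i)^2"]) auto
  next
    case (2 \<sigma>)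
    then show ?thesis
      using normal_density_square_integrable distributed_integrable[OF 2(2), of "\<lambda>x. x^2"] by simp
  qed
qed

lemma (in prob_space) gaussian_vec_mean_zero:
  assumes X: "gaussian_vec M X 0 C" and C: "\<And>a. 0 \<le> a \<bullet> (C *v a)"
  shows "(\<integral>\<omega>. X \<omega> $ i \<partial>M) = 0"
  using X C
proof (cases rule: gaussian_vec_component_cases[where i=i])
  case 1
  moreover have "(\<lambda>\<omega>. X \<omega> $ i) \<in> borel_measurable M"
    using X unfolding gaussian_vec_def by (blast intro: vec_nth_measurable)
  ultimately show ?thesis using integral_cong_AE[of "\<lambda>\<omega>. X \<omega> $ i" M "\<lambda>_. 0"] by simp
next
  case (2 \<sigma>)
  then have "(\<integral>\<omega>. X \<omega> $ i \<partial>M) = (\<integral>x. normal_density 0 \<sigma> x * x \<partial>lborel)"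
    by (intro distributed_integral[symmetric]) simp_all
  also have "\<dots> = 0" using integral_normal_moment_nz_1[OF \<open>0 < \<sigma>\<close>, of 0] by simp
  finally show ?thesis .
qed

section \<open>Sigma algebras generated by random variables\<close>

definition sigma_vars :: "'a measure \<Rightarrow> ('i \<Rightarrow> 'a \<Rightarrow> 'b::topological_space) \<Rightarrow> 'i set \<Rightarrow> 'a measure" where
  "sigma_vars M X J = vimage_algebra (space M) (\<lambda>\<omega>. restrict (\<lambda>j. X j \<omega>) J) (Pi\<^sub>M J (\<lambda>_. borel))"

lemma Fq_eq_sigma_vars: "Fq M w k = sigma_vars M w {..<k}"
  unfolding Fq_def sigma_vars_def ..

lemma space_sigma_vars [simp]: "space (sigma_vars M X J) = space M"
  unfolding sigma_vars_def by simp

lemma sigma_vars_measurable_component: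
  assumes "j \<in> J"
  shows "X j \<in> borel_measurable (sigma_vars M X J)"
proof -
  have "(\<lambda>\<omega>. restrict (\<lambda>j. X j \<omega>) J) \<in> measurable (sigma_vars M X J) (Pi\<^sub>M J (\<lambda>_. borel))"
    unfolding sigma_vars_def by (rule measurable_vimage_algebra1) (auto simp: space_PiM)
  from measurable_compose[OF this measurable_component_singleton[OF assms]] assms show ?thesis
    by simp
qed

lemma measurable_from_sigma_vars:
  assumes "space L = space M" and "\<And>j. j \<in> J \<Longrightarrow> X j \<in> borel_measurable L"
    and "f \<in> measurable (sigma_vars M X J) C"
  shows "f \<in> measurable L C"
proof -
  have "(\<lambda>x. x) \<in> measurable L (sigma_vars M X J)"
    unfolding sigma_vars_def
    by (rule measurable_vimage_algebra2) (auto simp: assms(1) intro!: measurable_restrict assms(2))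
  from measurable_comp[OF this assms(3)] show ?thesis by (simp add: comp_def)
qed

lemma subalgebra_sigma_vars:
  assumes "\<And>j. j \<in> J \<Longrightarrow> X j \<in> borel_measurable M"
  shows "subalgebra M (sigma_vars M X J)"
  unfolding subalgebra_def
proof safe
  fix A assume A: "A \<in> sets (sigma_vars M X J)"
  then have "(indicator A :: _ \<Rightarrow> real) \<in> borel_measurable M"
    by (intro measurable_from_sigma_vars[OF _ assms] borel_measurable_indicator) simp_all
  moreover have "A \<subseteq> space M" using sets.sets_into_space[OF A] by simp
  ultimately show "A \<in> sets M" by (metis borel_measurable_indicator_iff Int_absorb2)
qed (simp_all add: sigma_vars_def)

lemma (in prob_space) sigma_finite_subalgebra_sigma_vars:
  "(\<And>j. j \<in> J \<Longrightarrow> X j \<in> borel_measurable M) \<Longrightarrow> sigma_finite_subalgebra M (sigma_vars M X J)"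
  by (rule finite_measure_subalgebra_is_sigma_finite)
    (simp add: finite_measure_subalgebra_def finite_measure_subalgebra_axioms_def
      subalgebra_sigma_vars finite_measure_axioms)

lemma measurable_from_vimage_algebra:
  assumes "Z \<in> measurable M U" and "h \<in> measurable (vimage_algebra (space M) Z U) V"
  shows "h \<in> measurable M V"
proof -
  have "(\<lambda>x. x) \<in> measurable M (vimage_algebra (space M) Z U)"
    using assms(1) by (intro measurable_vimage_algebra2) simp_all
  from measurable_comp[OF this assms(2)] show ?thesis by (simp add: comp_def)
qed

lemma sigma_sets_preimages_vimage_algebra:
  assumes Z: "Z \<in> measurable M U" and h: "h \<in> measurable (vimage_algebra (space M) Z U) V"
  shows "sigma_sets (space M) {h -` A \<inter> space M |A. A \<in> sets V}
      \<subseteq> sigma_sets (space M) {Z -` A \<inter> space M |A. A \<in> sets U}"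
proof (rule sigma_sets_mono, safe)
  fix A assume "A \<in> sets V"
  then have "h -` A \<inter> space M \<in> sets (vimage_algebra (space M) Z U)"
    using measurable_sets[OF h] by simp
  then show "h -` A \<inter> space M \<in> sigma_sets (space M) {Z -` A \<inter> space M |A. A \<in> sets U}"
    using Z by (auto simp: sets_vimage_algebra2 measurable_space)
qed

lemma (in prob_space) indep_var_vimage_algebra:
  assumes XY: "indep_var S X T Y"
    and f: "f \<in> measurable (vimage_algebra (space M) X S) S'"
    and g: "g \<in> measurable (vimage_algebra (space M) Y T) T'"
  shows "indep_var S' f T' g"
proof -
  have X: "random_variable S X" and Y: "random_variable T Y"
    using XY unfolding indep_var_eq by auto
  show ?thesis
    unfolding indep_var_eq
  proof (intro conjI)
    show "random_variable S' f" "random_variable T' g"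
      using measurable_from_vimage_algebra[OF X f] measurable_from_vimage_algebra[OF Y g] by simp_all
    show "indep_set (sigma_sets (space M) {f -` A \<inter> space M |A. A \<in> sets S'})
        (sigma_sets (space M) {g -` A \<inter> space M |A. A \<in> sets T'})"
      using XY unfolding indep_var_eq indep_set_def
      by (elim conjE indep_sets_mono_sets)
        (use sigma_sets_preimages_vimage_algebra[OF X f] sigma_sets_preimages_vimage_algebra[OF Y g]
          in \<open>auto split: bool.split\<close>)
  qed
qed

lemma (in prob_space) integral_mult_indep_sigma_vars:
  fixes X :: "'i \<Rightarrow> 'a \<Rightarrow> 'b::topological_space" and h :: "'b \<Rightarrow> real"
  assumes ind: "indep_vars (\<lambda>_. borel) X I" and i: "i \<in> I" "i \<notin> J" and J: "J \<subseteq> I"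
    and h: "h \<in> borel_measurable borel" and hi: "integrable M (\<lambda>\<omega>. h (X i \<omega>))"
    and f: "f \<in> borel_measurable (sigma_vars M X J)" and fi: "integrable M f"
  shows "(\<integral>\<omega>. h (X i \<omega>) * f \<omega> \<partial>M) = (\<integral>\<omega>. h (X i \<omega>) \<partial>M) * (\<integral>\<omega>. f \<omega> \<partial>M)"
proof -
  let ?Ri = "\<lambda>\<omega>. restrict (\<lambda>j. X j \<omega>) {i}" and ?RJ = "\<lambda>\<omega>. restrict (\<lambda>j. X j \<omega>) J"
  have "indep_var (Pi\<^sub>M {i} (\<lambda>_. borel)) ?Ri (Pi\<^sub>M J (\<lambda>_. borel)) ?RJ"
    using i J by (intro indep_var_restrict[OF ind]) auto
  moreover have "(\<lambda>\<omega>. h (X i \<omega>)) \<in> borel_measurable (vimage_algebra (space M) ?Ri (Pi\<^sub>M {i} (\<lambda>_. borel)))"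
  proof -
    have "(\<lambda>x. h (x i)) \<in> borel_measurable (Pi\<^sub>M {i} (\<lambda>_. borel))" using h by measurable
    from measurable_compose[OF measurable_vimage_algebra1 this, of ?Ri "space M"] show ?thesis
      by (simp add: space_PiM)
  qed
  moreover have "f \<in> borel_measurable (vimage_algebra (space M) ?RJ (Pi\<^sub>M J (\<lambda>_. borel)))"
    using f unfolding sigma_vars_def .
  ultimately have "indep_var borel (\<lambda>\<omega>. h (X i \<omega>)) borel f"
    by (rule indep_var_vimage_algebra)
  then show ?thesis using hi fi by (rule indep_var_lebesgue_integral)
qed

lemma (in prob_space) vec_square_integrable_hist:
  fixes eta :: "nat \<Rightarrow> 'a \<Rightarrow> nat" and x0 :: "'a \<Rightarrow> real^'n" and w :: "nat \<Rightarrow> 'a \<Rightarrow> real^'n"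
    and A :: "real^'n^'n" and B :: "real^'m^'n" and K :: "nat \<Rightarrow> real^'n^'m"
  assumes F: "subalgebra M F" and x0: "vec_square_integrable M F x0"
    and w: "\<And>j. j < k \<Longrightarrow> vec_square_integrable M F (w j)"
    and eta: "\<And>j. j < k \<Longrightarrow> eta j \<in> measurable F (count_space UNIV)"
    and eta_le: "\<And>j x. j < k \<Longrightarrow> x \<in> space M \<Longrightarrow> eta j x \<le> j"
  shows "vec_square_integrable M F (\<lambda>x. fst (hist A B K (\<lambda>t. eta t x) (x0 x) (\<lambda>t. w t x) k) j)
       \<and> vec_square_integrable M F (\<lambda>x. snd (hist A B K (\<lambda>t. eta t x) (x0 x) (\<lambda>t. w t x) k) j)"
  using w eta eta_le
proof (induction k arbitrary: j)
  case 0
  then show ?case using x0 vec_square_integrable_const[OF F] by simp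
next
  case (Suc k)
  define xs where "xs x = fst (hist A B K (\<lambda>t. eta t x) (x0 x) (\<lambda>t. w t x) k)" for x
  define us where "us x = snd (hist A B K (\<lambda>t. eta t x) (x0 x) (\<lambda>t. w t x) k)" for x
  define xh where "xh n x = mpow A n *v xs x (k - n) + (\<Sum>t\<in>{1..n}. (mpow A (t - 1) ** B) *v us x (k - t))"
    for n x
  define uk where "uk x = - (K k *v xh (eta k x) x)" for x
  have hist_Suc: "hist A B K (\<lambda>t. eta t x) (x0 x) (\<lambda>t. w t x) (Suc k)
      = ((xs x)(Suc k := A *v xs x k + B *v uk x + w k x), (us x)(k := uk x))" for x
    by (simp add: Let_def xs_def us_def uk_def xh_def)
  have IH: "vec_square_integrable M F (\<lambda>x. xs x j) \<and> vec_square_integrable M F (\<lambda>x. us x j)" for j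
    unfolding xs_def us_def by (rule Suc.IH) (use Suc.prems in auto)
  have "vec_square_integrable M F (xh n)" for n
    unfolding xh_def
    by (intro vec_square_integrable_add[OF F] vec_square_integrable_matrix_vector_mult[OF F]
        vec_square_integrable_sum[OF F]) (use IH in auto)
  moreover have "eta k \<in> measurable F (count_space UNIV)" "\<And>x. x \<in> space M \<Longrightarrow> eta k x \<le> k"
    using Suc.prems(2,3)[of k] by auto
  ultimately have "vec_square_integrable M F (\<lambda>x. xh (eta k x) x)"
    using vec_square_integrable_select[OF F, where f=xh and b=k] by blast
  then have uk: "vec_square_integrable M F uk"
    unfolding uk_def by (intro vec_square_integrable_uminus vec_square_integrable_matrix_vector_mult[OF F])
  have "vec_square_integrable M F (\<lambda>x. A *v xs x k + B *v uk x + w k x)"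
    by (intro vec_square_integrable_add[OF F] vec_square_integrable_matrix_vector_mult[OF F])
      (use IH uk Suc.prems(1)[of k] in auto)
  then show ?case
    unfolding hist_Suc using IH uk by (cases "j = Suc k"; cases "j = k") auto
qed

lemma hist_cong_noise: "(\<And>t. t < k \<Longrightarrow> w t = w' t) \<Longrightarrow> hist A B K eta x0 w k = hist A B K eta x0 w' k"
  by (induction k) (simp_all add: Let_def)

lemma cl_u_cong_noise: "(\<And>t. t < k \<Longrightarrow> w t = w' t) \<Longrightarrow> cl_u A B K eta x0 w k = cl_u A B K eta x0 w' k"
  unfolding cl_u_def by (simp add: Let_def hist_cong_noise[of k w w'])

lemma select_eq_sum_indicator:
  fixes eta :: "'a \<Rightarrow> nat" and f :: "nat \<Rightarrow> 'a \<Rightarrow> real"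
  assumes "x \<in> space M" and "eta x \<le> b"
  shows "f (eta x) x = (\<Sum>e\<le>b. indicator {y\<in>space M. eta y = e} x * f e x)"
proof -
  have "(\<Sum>e\<le>b. indicator {y\<in>space M. eta y = e} x * f e x)
      = (\<Sum>e\<in>{eta x}. indicator {y\<in>space M. eta y = e} x * f e x)"
    by (rule sum.mono_neutral_right) (use assms in \<open>auto simp: indicator_def\<close>)
  then show ?thesis using assms(1) by simp
qed

lemma
  fixes eta :: "'a \<Rightarrow> nat" and f :: "nat \<Rightarrow> 'a \<Rightarrow> real"
  assumes eta: "eta \<in> measurable M (count_space UNIV)"
    and bound: "\<And>x. x \<in> space M \<Longrightarrow> eta x \<le> b" and f: "\<And>n. n \<le> b \<Longrightarrow> integrable M (f n)"
  shows integrable_select: "integrable M (\<lambda>x. f (eta x) x)"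
    and integral_select:
      "(\<integral>x. f (eta x) x \<partial>M) = (\<Sum>e\<le>b. \<integral>x. indicator {y\<in>space M. eta y = e} x * f e x \<partial>M)"
proof -
  have sets: "{y\<in>space M. eta y = e} \<in> sets M" for e using eta by measurable
  have parts: "integrable M (\<lambda>x. indicator {y\<in>space M. eta y = e} x * f e x)" if "e \<le> b" for e
    using integrable_real_mult_indicator[OF sets f[OF that]] by (simp add: mult.commute)
  have sum: "f (eta x) x = (\<Sum>e\<le>b. indicator {y\<in>space M. eta y = e} x * f e x)"
    if "x \<in> space M" for x
    using that bound[OF that] by (rule select_eq_sum_indicator)
  have "integrable M (\<lambda>x. \<Sum>e\<le>b. indicator {y\<in>space M. eta y = e} x * f e x)"
    using parts by (intro Bochner_Integration.integrable_sum) auto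
  then show "integrable M (\<lambda>x. f (eta x) x)"
    by (rule Bochner_Integration.integrable_cong[THEN iffD1, OF refl _ , rotated]) (simp add: sum)
  have "(\<integral>x. f (eta x) x \<partial>M) = (\<integral>x. (\<Sum>e\<le>b. indicator {y\<in>space M. eta y = e} x * f e x) \<partial>M)"
    using sum by (rule Bochner_Integration.integral_cong[OF refl])
  also have "\<dots> = (\<Sum>e\<le>b. \<integral>x. indicator {y\<in>space M. eta y = e} x * f e x \<partial>M)"
    using parts by (intro Bochner_Integration.integral_sum) auto
  finally show "(\<integral>x. f (eta x) x \<partial>M) = (\<Sum>e\<le>b. \<integral>x. indicator {y\<in>space M. eta y = e} x * f e x \<partial>M)" .
qed

lemma (in sigma_finite_subalgebra) integral_real_cond_exp_select:
  fixes eta :: "'a \<Rightarrow> nat" and f :: "nat \<Rightarrow> 'a \<Rightarrow> real"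
  assumes eta: "eta \<in> measurable F (count_space UNIV)"
    and bound: "\<And>x. x \<in> space M \<Longrightarrow> eta x \<le> b" and f: "\<And>n. n \<le> b \<Longrightarrow> integrable M (f n)"
  shows "integrable M (\<lambda>x. real_cond_exp M F (f (eta x)) x)"
    and "(\<integral>x. f (eta x) x \<partial>M) = (\<integral>x. real_cond_exp M F (f (eta x)) x \<partial>M)"
proof -
  have eta_M: "eta \<in> measurable M (count_space UNIV)"
    using eta measurable_from_subalg[OF subalg] by blast
  have cf: "integrable M (real_cond_exp M F (f n))" if "n \<le> b" for n
    using real_cond_exp_int(1)[OF f[OF that]] .
  show "integrable M (\<lambda>x. real_cond_exp M F (f (eta x)) x)"
    using integrable_select[where f="\<lambda>n. real_cond_exp M F (f n)", OF eta_M bound cf] .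
  have set_F: "{y\<in>space M. eta y = e} \<in> sets F" for e
  proof -
    have "{y\<in>space F. eta y = e} \<in> sets F" using eta by measurable
    then show ?thesis using subalg by (simp add: subalgebra_def)
  qed
  have "(\<integral>x. indicator {y\<in>space M. eta y = e} x * f e x \<partial>M)
      = (\<integral>x. indicator {y\<in>space M. eta y = e} x * real_cond_exp M F (f e) x \<partial>M)" if "e \<le> b" for e
  proof (rule real_cond_exp_intg(2)[symmetric])
    show "integrable M (\<lambda>x. indicator {y\<in>space M. eta y = e} x * f e x)"
      using integrable_real_mult_indicator[OF subalg[unfolded subalgebra_def, THEN conjunct2, THEN subsetD,
        OF set_F] f[OF that]] by (simp add: mult.commute)
    show "(indicator {y\<in>space M. eta y = e} :: 'a \<Rightarrow> real) \<in> borel_measurable F"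
      using set_F by simp
    show "f e \<in> borel_measurable M" using f[OF that] by (rule borel_measurable_integrable)
  qed
  then have "(\<Sum>e\<le>b. \<integral>x. indicator {y\<in>space M. eta y = e} x * f e x \<partial>M)
      = (\<Sum>e\<le>b. \<integral>x. indicator {y\<in>space M. eta y = e} x * real_cond_exp M F (f e) x \<partial>M)"
    by (intro sum.cong) auto
  then show "(\<integral>x. f (eta x) x \<partial>M) = (\<integral>x. real_cond_exp M F (f (eta x)) x \<partial>M)"
    using integral_select[where f=f, OF eta_M bound f]
      integral_select[where f="\<lambda>n. real_cond_exp M F (f n)", OF eta_M bound cf] by simp
qed

lemma integrable_Min:
  fixes f :: "'i \<Rightarrow> 'a \<Rightarrow> real"
  assumes S: "finite S" "S \<noteq> {}" and f: "\<And>e. e \<in> S \<Longrightarrow> integrable M (f e)"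
  shows "integrable M (\<lambda>\<omega>. Min ((\<lambda>e. f e \<omega>) ` S))"
proof (rule Bochner_Integration.integrable_bound)
  show "integrable M (\<lambda>\<omega>. \<Sum>e\<in>S. \<bar>f e \<omega>\<bar>)" using f by auto
  show "(\<lambda>\<omega>. Min ((\<lambda>e. f e \<omega>) ` S)) \<in> borel_measurable M"
    using S f by (intro borel_measurable_Min) auto
  have "\<bar>Min ((\<lambda>e. f e \<omega>) ` S)\<bar> \<le> (\<Sum>e\<in>S. \<bar>f e \<omega>\<bar>)" for \<omega>
  proof -
    have "Min ((\<lambda>e. f e \<omega>) ` S) \<in> (\<lambda>e. f e \<omega>) ` S" using S by (intro Min_in) auto
    then obtain e where "e \<in> S" "Min ((\<lambda>e. f e \<omega>) ` S) = f e \<omega>" by auto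
    moreover have "\<bar>f e \<omega>\<bar> \<le> (\<Sum>e\<in>S. \<bar>f e \<omega>\<bar>)" by (rule member_le_sum) (use \<open>e \<in> S\<close> S in auto)
    ultimately show ?thesis by simp
  qed
  then show "AE \<omega> in M. norm (Min ((\<lambda>e. f e \<omega>) ` S)) \<le> norm (\<Sum>e\<in>S. \<bar>f e \<omega>\<bar>)"
    by (simp add: sum_nonneg)
qed

section \<open>Dynamic programming for the ages\<close>

locale queued_lqg = prob_space M for M :: "'a measure" +
  fixes A :: "real^'n^'n" and B :: "real^'m^'n" and Q :: "nat \<Rightarrow> real^'n^'n"
    and R :: "nat \<Rightarrow> real^'m^'m" and \<theta> :: "nat \<Rightarrow> real" and N :: nat
    and x0 :: "'a \<Rightarrow> real^'n" and w :: "nat \<Rightarrow> 'a \<Rightarrow> real^'n"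
  assumes Q_psd: "\<And>k. k \<le> Suc N \<Longrightarrow> sym_psd (Q k)"
    and R_pd: "\<And>k. k \<le> N \<Longrightarrow> sym_pd (R k)"
    and x0_square_integrable: "vec_square_integrable M M x0"
    and w_square_integrable: "\<And>k. k \<le> N \<Longrightarrow> vec_square_integrable M M (w k)"
    and w_mean_zero: "\<And>k i. k \<le> N \<Longrightarrow> (\<integral>\<omega>. w k \<omega> $ i \<partial>M) = 0"
    and indep_x0_w: "indep_vars (\<lambda>_. borel) (case_option x0 w) (insert None (Some ` {0..N}))"
begin

abbreviation "obj \<equiv> qobj M A B Q R \<theta> N w"
abbreviation "V \<equiv> Vq M A B Q R \<theta> N w"

lemma w_measurable: "k \<le> N \<Longrightarrow> w k \<in> borel_measurable M"
  using w_square_integrable vec_square_integrable_measurable by blast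

lemma sigma_finite_subalgebra_Fq: "k \<le> Suc N \<Longrightarrow> sigma_finite_subalgebra M (Fq M w k)"
  unfolding Fq_eq_sigma_vars by (rule sigma_finite_subalgebra_sigma_vars) (auto intro: w_measurable)

lemma subalgebra_Fq: "k \<le> Suc N \<Longrightarrow> subalgebra M (Fq M w k)"
  using sigma_finite_subalgebra_Fq sigma_finite_subalgebra.subalg by blast

lemma Fq_w: "t < k \<Longrightarrow> w t \<in> borel_measurable (Fq M w k)"
  unfolding Fq_eq_sigma_vars by (rule sigma_vars_measurable_component) simp

lemma measurable_Fq_mono:
  "j \<le> k \<Longrightarrow> f \<in> measurable (Fq M w j) C \<Longrightarrow> f \<in> measurable (Fq M w k) C"
  unfolding Fq_eq_sigma_vars by (rule measurable_from_sigma_vars) (auto intro: sigma_vars_measurable_component)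

lemma measurable_from_Fq: "k \<le> Suc N \<Longrightarrow> f \<in> measurable (Fq M w k) C \<Longrightarrow> f \<in> measurable M C"
  using measurable_from_subalg subalgebra_Fq by blast

lemma ek_square_integrable: "k \<le> Suc N \<Longrightarrow> vec_square_integrable M M (ek A w k e)"
  unfolding ek_def
  by (intro vec_square_integrable_sum[OF subalgebra_refl] vec_square_integrable_matrix_vector_mult[OF subalgebra_refl]
      w_square_integrable) auto

text \<open>For \<open>k = 0\<close> the truncated index \<open>k - t\<close> would refer to \<open>w\<^sub>0\<close>, which is not yet known.\<close>
lemma ek_measurable_Fq: "1 \<le> k \<Longrightarrow> ek A w k e \<in> borel_measurable (Fq M w k)"
  unfolding ek_def by (intro borel_measurable_sum borel_measurable_matrix_vector_mult Fq_w) auto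

lemma integrable_Vq: "k \<le> Suc N \<Longrightarrow> integrable M (V k a)"
proof -
  have "integrable M (Vq_back M A B Q R \<theta> N w j a)" if "j \<le> Suc N" for j a
    using that
  proof (induction j arbitrary: a)
    case (Suc j)
    let ?k = "N - j"
    interpret F: sigma_finite_subalgebra M "Fq M w ?k" using sigma_finite_subalgebra_Fq by simp
    have "integrable M (\<lambda>\<omega>. - \<theta> ?k * real e + ek A w ?k e \<omega> \<bullet> (ricGamma A B Q R N ?k *v ek A w ?k e \<omega>)
                + real_cond_exp M (Fq M w ?k) (Vq_back M A B Q R \<theta> N w j e) \<omega>)" for e
      using integrable_quadratic_form[OF ek_square_integrable] F.real_cond_exp_int(1) Suc by auto
    then show ?case by (simp add: Let_def integrable_Min)
  qed (simp add: Vq_back.simps(1)[abs_def])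
  then show "k \<le> Suc N \<Longrightarrow> integrable M (V k a)" unfolding Vq_def by simp
qed

lemma Vq_Suc_N: "V (Suc N) a \<omega> = 0"
  unfolding Vq_def by simp

lemma Vq_eq_Min_qobj: "k \<le> N \<Longrightarrow> V k a \<omega> = Min ((\<lambda>e. obj k e \<omega>) ` {0..a+1})"
proof -
  assume "k \<le> N"
  then have "Suc N - k = Suc (N - k)" "N - (N - k) = k" by simp_all
  then show ?thesis unfolding Vq_def qobj_def by (simp add: Let_def algebra_simps)
qed

lemma qobj_measurable_Fq: "1 \<le> k \<Longrightarrow> k \<le> N \<Longrightarrow> obj k e \<in> borel_measurable (Fq M w k)"
  using ek_measurable_Fq[of k e] unfolding qobj_def[abs_def] by measurable

end

definition argmin_age :: "(nat \<Rightarrow> 'a \<Rightarrow> real) \<Rightarrow> nat \<Rightarrow> 'a \<Rightarrow> nat" where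
  "argmin_age q a \<omega> = (LEAST e. e \<le> a + 1 \<and> (\<forall>e'\<le>a + 1. q e \<omega> \<le> q e' \<omega>))"

lemma argmin_age:
  "argmin_age q a \<omega> \<le> a + 1 \<and> (\<forall>e'\<le>a + 1. q (argmin_age q a \<omega>) \<omega> \<le> q e' \<omega>)"
proof -
  have "Min ((\<lambda>e. q e \<omega>) ` {..a+1}) \<in> (\<lambda>e. q e \<omega>) ` {..a+1}" by (intro Min_in) auto
  then obtain e where "e \<le> a + 1" "q e \<omega> = Min ((\<lambda>e. q e \<omega>) ` {..a+1})"
    by (metis atMost_iff imageE)
  then have "e \<le> a + 1 \<and> (\<forall>e'\<le>a + 1. q e \<omega> \<le> q e' \<omega>)" by simp
  then show ?thesis unfolding argmin_age_def by (rule LeastI)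
qed

primrec greedy_ages :: "(nat \<Rightarrow> nat \<Rightarrow> 'a \<Rightarrow> real) \<Rightarrow> nat \<Rightarrow> 'a \<Rightarrow> nat" where
  "greedy_ages q 0 \<omega> = 0"
| "greedy_ages q (Suc k) \<omega> = argmin_age (q (Suc k)) (greedy_ages q k \<omega>) \<omega>"

context queued_lqg
begin

lemma greedy_ages_measurable: "k \<le> N \<Longrightarrow> greedy_ages obj k \<in> measurable (Fq M w k) (count_space UNIV)"
proof (induction k)
  case (Suc k)
  have [measurable]: "obj (Suc k) e \<in> borel_measurable (Fq M w (Suc k))" for e
    using Suc.prems by (intro qobj_measurable_Fq) auto
  have "(\<lambda>\<omega>. argmin_age (obj (Suc k)) a \<omega>) \<in> measurable (Fq M w (Suc k)) (count_space UNIV)" for a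
    unfolding argmin_age_def by measurable
  moreover have "greedy_ages obj k \<in> measurable (Fq M w (Suc k)) (count_space UNIV)"
    by (rule measurable_Fq_mono[OF _ Suc.IH]) (use Suc.prems in auto)
  ultimately show ?case
    unfolding greedy_ages.simps by (rule measurable_compose_countable)
qed (simp add: greedy_ages.simps(1)[abs_def])

lemma greedy_ages_admissible_argmin:
  "admissible M w N (greedy_ages obj) \<and> argmin_policy M A B Q R \<theta> N w (greedy_ages obj)"
proof -
  have "greedy_ages obj k \<omega> \<le> greedy_ages obj (k - 1) \<omega> + 1
      \<and> (\<forall>e\<le>greedy_ages obj (k - 1) \<omega> + 1. obj k (greedy_ages obj k \<omega>) \<omega> \<le> obj k e \<omega>)" if "1 \<le> k" for k \<omega>
    using that argmin_age[of "obj k"] by (cases k) auto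
  then show ?thesis
    unfolding admissible_def argmin_policy_def using greedy_ages_measurable by auto
qed

lemma admissible_le: "admissible M w N \<pi> \<Longrightarrow> k \<le> N \<Longrightarrow> \<omega> \<in> space M \<Longrightarrow> \<pi> k \<omega> \<le> k"
proof (induction k)
  case (Suc k)
  then have "Suc k \<in> {1..N}" by simp
  with Suc.prems have "\<pi> (Suc k) \<omega> \<le> \<pi> (Suc k - 1) \<omega> + 1" unfolding admissible_def by blast
  with Suc show ?case by simp
qed (simp add: admissible_def)

lemma admissible_measurable_Fq:
  "admissible M w N \<pi> \<Longrightarrow> k \<le> N \<Longrightarrow> \<pi> k \<in> measurable (Fq M w k) (count_space UNIV)"
  unfolding admissible_def by auto

lemma admissible_measurable: "admissible M w N \<pi> \<Longrightarrow> k \<le> N \<Longrightarrow> \<pi> k \<in> measurable M (count_space UNIV)"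
  by (rule measurable_from_Fq[of k]) (auto dest: admissible_measurable_Fq)

definition stage_cost :: "(nat \<Rightarrow> 'a \<Rightarrow> nat) \<Rightarrow> nat \<Rightarrow> 'a \<Rightarrow> real" where
  "stage_cost \<pi> k \<omega> = - \<theta> k * real (\<pi> k \<omega>)
     + ek A w k (\<pi> k \<omega>) \<omega> \<bullet> (ricGamma A B Q R N k *v ek A w k (\<pi> k \<omega>) \<omega>)"

lemma integrable_stage_cost: "admissible M w N \<pi> \<Longrightarrow> k \<le> N \<Longrightarrow> integrable M (stage_cost \<pi> k)"
proof -
  assume adm: "admissible M w N \<pi>" and k: "k \<le> N"
  note \<pi>_meas = admissible_measurable[OF adm k] and \<pi>_le = admissible_le[OF adm k]
  have "vec_square_integrable M M (\<lambda>\<omega>. ek A w k (\<pi> k \<omega>) \<omega>)"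
    using vec_square_integrable_select[OF subalgebra_refl \<pi>_meas \<pi>_le, where f="ek A w k"]
      ek_square_integrable k by simp
  moreover have "integrable M (\<lambda>\<omega>. real (\<pi> k \<omega>))"
    by (rule integrable_select[OF \<pi>_meas \<pi>_le, where f="\<lambda>n \<omega>. real n"]) (auto intro: integrable_const)
  ultimately show ?thesis
    unfolding stage_cost_def[abs_def] by (intro Bochner_Integration.integrable_add integrable_quadratic_form) auto
qed

lemma integral_qobj_select:
  assumes adm: "admissible M w N \<pi>" and k: "k \<le> N"
  shows "integrable M (\<lambda>\<omega>. obj k (\<pi> k \<omega>) \<omega>)"
    and "(\<integral>\<omega>. obj k (\<pi> k \<omega>) \<omega> \<partial>M) = (\<integral>\<omega>. stage_cost \<pi> k \<omega> \<partial>M) + (\<integral>\<omega>. V (Suc k) (\<pi> k \<omega>) \<omega> \<partial>M)"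
proof -
  interpret F: sigma_finite_subalgebra M "Fq M w k" using sigma_finite_subalgebra_Fq k by simp
  note tower = F.integral_real_cond_exp_select[where f="\<lambda>e. V (Suc k) e",
      OF admissible_measurable_Fq[OF adm k] admissible_le[OF adm k] integrable_Vq]
  have obj: "obj k (\<pi> k \<omega>) \<omega> = stage_cost \<pi> k \<omega> + real_cond_exp M (Fq M w k) (V (Suc k) (\<pi> k \<omega>)) \<omega>" for \<omega>
    unfolding qobj_def stage_cost_def by simp
  show "integrable M (\<lambda>\<omega>. obj k (\<pi> k \<omega>) \<omega>)"
    unfolding obj using integrable_stage_cost[OF adm k] tower(1) k by auto
  show "(\<integral>\<omega>. obj k (\<pi> k \<omega>) \<omega> \<partial>M) = (\<integral>\<omega>. stage_cost \<pi> k \<omega> \<partial>M) + (\<integral>\<omega>. V (Suc k) (\<pi> k \<omega>) \<omega> \<partial>M)"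
    unfolding obj using integrable_stage_cost[OF adm k] tower k by simp
qed


lemma Vq_le_qobj:
  assumes "admissible M w N \<pi>" "1 \<le> k" "k \<le> N" "\<omega> \<in> space M"
  shows "V k (\<pi> (k - 1) \<omega>) \<omega> \<le> obj k (\<pi> k \<omega>) \<omega>"
proof -
  have "\<pi> k \<omega> \<le> \<pi> (k - 1) \<omega> + 1" using assms unfolding admissible_def by auto
  then show ?thesis unfolding Vq_eq_Min_qobj[OF assms(3)] by (intro Min_le) auto
qed

lemma Vq_eq_qobj:
  assumes "argmin_policy M A B Q R \<theta> N w \<pi>" "1 \<le> k" "k \<le> N" "\<omega> \<in> space M"
  shows "V k (\<pi> (k - 1) \<omega>) \<omega> = obj k (\<pi> k \<omega>) \<omega>"
proof -
  have "\<pi> k \<omega> \<le> \<pi> (k - 1) \<omega> + 1" "\<forall>e\<le>\<pi> (k - 1) \<omega> + 1. obj k (\<pi> k \<omega>) \<omega> \<le> obj k e \<omega>"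
    using assms unfolding argmin_policy_def by auto
  then show ?thesis unfolding Vq_eq_Min_qobj[OF assms(3)] by (intro Min_eqI) auto
qed

definition cost_to_go :: "(nat \<Rightarrow> 'a \<Rightarrow> nat) \<Rightarrow> nat \<Rightarrow> real" where
  "cost_to_go \<pi> k = (\<integral>\<omega>. (\<Sum>j\<in>{k..N}. stage_cost \<pi> j \<omega>) \<partial>M)"

lemma cost_to_go_step:
  assumes "admissible M w N \<pi>" "k \<le> N"
  shows "cost_to_go \<pi> k = (\<integral>\<omega>. stage_cost \<pi> k \<omega> \<partial>M) + cost_to_go \<pi> (Suc k)"
proof -
  have split: "(\<Sum>j\<in>{k..N}. stage_cost \<pi> j \<omega>)
      = stage_cost \<pi> k \<omega> + (\<Sum>j\<in>{Suc k..N}. stage_cost \<pi> j \<omega>)" for \<omega>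
    using assms(2) by (simp add: sum.atLeast_Suc_atMost)
  show ?thesis
    unfolding cost_to_go_def split using integrable_stage_cost[OF assms(1)] assms(2)
    by (intro Bochner_Integration.integral_add Bochner_Integration.integrable_sum) auto
qed

lemma integral_Vq_le_cost_to_go:
  assumes adm: "admissible M w N \<pi>"
  shows "k \<le> Suc N \<Longrightarrow> 1 \<le> k \<Longrightarrow> (\<integral>\<omega>. V k (\<pi> (k - 1) \<omega>) \<omega> \<partial>M) \<le> cost_to_go \<pi> k"
proof (induction k rule: inc_induct)
  case base
  then show ?case by (simp add: Vq_Suc_N cost_to_go_def)
next
  case (step k)
  then have k: "1 \<le> k" "k \<le> N" "k - 1 \<le> N" by auto
  have "integrable M (\<lambda>\<omega>. V k (\<pi> (k - 1) \<omega>) \<omega>)"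
    using integrable_select[where f="V k", OF admissible_measurable[OF adm k(3)] admissible_le[OF adm k(3)]]
      integrable_Vq k by simp
  moreover have "integrable M (\<lambda>\<omega>. obj k (\<pi> k \<omega>) \<omega>)"
    using integral_qobj_select(1)[OF adm k(2)] .
  moreover have "V k (\<pi> (k - 1) \<omega>) \<omega> \<le> obj k (\<pi> k \<omega>) \<omega>" if "\<omega> \<in> space M" for \<omega>
    using Vq_le_qobj[OF adm k(1,2) that] .
  ultimately have "(\<integral>\<omega>. V k (\<pi> (k - 1) \<omega>) \<omega> \<partial>M) \<le> (\<integral>\<omega>. obj k (\<pi> k \<omega>) \<omega> \<partial>M)"
    by (rule integral_mono)
  also have "\<dots> \<le> cost_to_go \<pi> k"
    using step.IH k(1) unfolding integral_qobj_select(2)[OF adm k(2)] cost_to_go_step[OF adm k(2)] by simp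
  finally show ?case .
qed

lemma integral_Vq_eq_cost_to_go:
  assumes adm: "admissible M w N \<pi>" and opt: "argmin_policy M A B Q R \<theta> N w \<pi>"
  shows "k \<le> Suc N \<Longrightarrow> 1 \<le> k \<Longrightarrow> (\<integral>\<omega>. V k (\<pi> (k - 1) \<omega>) \<omega> \<partial>M) = cost_to_go \<pi> k"
proof (induction k rule: inc_induct)
  case base
  then show ?case by (simp add: Vq_Suc_N cost_to_go_def)
next
  case (step k)
  then have k: "1 \<le> k" "k \<le> N" by auto
  have "(\<integral>\<omega>. V k (\<pi> (k - 1) \<omega>) \<omega> \<partial>M) = (\<integral>\<omega>. obj k (\<pi> k \<omega>) \<omega> \<partial>M)"
    using Vq_eq_qobj[OF opt k] by (rule Bochner_Integration.integral_cong[OF refl])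
  also have "\<dots> = cost_to_go \<pi> k"
    using step.IH k(1) unfolding integral_qobj_select(2)[OF adm k(2)] cost_to_go_step[OF adm k(2)] by simp
  finally show ?case .
qed


section \<open>The cost of an admissible policy\<close>

abbreviation past :: "nat \<Rightarrow> 'a measure" where
  "past k \<equiv> sigma_vars M (case_option x0 w) (insert None (Some ` {..<k}))"

lemma subalgebra_past: "k \<le> Suc N \<Longrightarrow> subalgebra M (past k)"
proof (rule subalgebra_sigma_vars)
  fix j assume "k \<le> Suc N" "j \<in> insert None (Some ` {..<k})"
  then consider "j = None" | t where "j = Some t" "t \<le> N" by fastforce
  then show "case_option x0 w j \<in> borel_measurable M"
    by cases (simp_all add: vec_square_integrable_measurable[OF x0_square_integrable] w_measurable)
qed

lemma vec_square_integrable_past_x0: "vec_square_integrable M (past k) x0"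
  using x0_square_integrable sigma_vars_measurable_component[of None _ "case_option x0 w"]
  unfolding vec_square_integrable_iff by simp

lemma vec_square_integrable_past_w: "t < k \<Longrightarrow> k \<le> Suc N \<Longrightarrow> vec_square_integrable M (past k) (w t)"
  using w_square_integrable[of t] sigma_vars_measurable_component[of "Some t" _ "case_option x0 w"]
  unfolding vec_square_integrable_iff by simp

lemma admissible_measurable_past:
  assumes "admissible M w N \<pi>" "j \<le> k" "k \<le> N"
  shows "\<pi> j \<in> measurable (past k) (count_space UNIV)"
proof (rule measurable_from_sigma_vars)
  show "\<pi> j \<in> measurable (sigma_vars M w {..<j}) (count_space UNIV)"
    using admissible_measurable_Fq[OF assms(1)] assms(2,3) by (simp add: Fq_eq_sigma_vars)
  show "w t \<in> borel_measurable (past k)" if "t \<in> {..<j}" for t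
    using that assms(2) sigma_vars_measurable_component[of "Some t" _ "case_option x0 w"] by simp
qed simp

text \<open>The state and the input at time \<open>k\<close> depend only on \<open>x\<^sub>0, w\<^sub>0, \<dots>, w\<^sub>k\<^sub>-\<^sub>1\<close>, hence are
  independent of the zero mean noise \<open>w\<^sub>k\<close>.\<close>
lemma vec_square_integrable_past_state_input:
  assumes adm: "admissible M w N \<pi>" and k: "k \<le> N"
  shows "vec_square_integrable M (past k) (\<lambda>\<omega>. cl_x A B K (\<lambda>t. \<pi> t \<omega>) (x0 \<omega>) (\<lambda>t. w t \<omega>) k)"
    and "vec_square_integrable M (past k) (\<lambda>\<omega>. cl_u A B K (\<lambda>t. \<pi> t \<omega>) (x0 \<omega>) (\<lambda>t. w t \<omega>) k)"
proof -
  have H: "subalgebra M (past k)" using k by (intro subalgebra_past) simp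
  define w' where "w' t = (if t < k then w t else (\<lambda>_. 0))" for t
  have w': "vec_square_integrable M (past k) (w' t)" for t
    unfolding w'_def using k vec_square_integrable_past_w vec_square_integrable_const[OF H] by auto
  have "vec_square_integrable M (past k) (\<lambda>\<omega>. fst (hist A B K (\<lambda>t. \<pi> t \<omega>) (x0 \<omega>) (\<lambda>t. w t \<omega>) k) k)"
    using vec_square_integrable_hist[where w=w and eta=\<pi> and k=k, OF H vec_square_integrable_past_x0]
      vec_square_integrable_past_w admissible_measurable_past[OF adm] admissible_le[OF adm] k by auto
  then show "vec_square_integrable M (past k) (\<lambda>\<omega>. cl_x A B K (\<lambda>t. \<pi> t \<omega>) (x0 \<omega>) (\<lambda>t. w t \<omega>) k)"
    unfolding cl_x_def .
  have "vec_square_integrable M (past k) (\<lambda>\<omega>. snd (hist A B K (\<lambda>t. \<pi> t \<omega>) (x0 \<omega>) (\<lambda>t. w' t \<omega>) (Suc k)) k)"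
    using vec_square_integrable_hist[where w=w' and eta=\<pi> and k="Suc k", OF H vec_square_integrable_past_x0 w']
      admissible_measurable_past[OF adm] admissible_le[OF adm] k by auto
  moreover have "cl_u A B K (\<lambda>t. \<pi> t \<omega>) (x0 \<omega>) (\<lambda>t. w t \<omega>) k
      = snd (hist A B K (\<lambda>t. \<pi> t \<omega>) (x0 \<omega>) (\<lambda>t. w' t \<omega>) (Suc k)) k" for \<omega>
    unfolding cl_u_def[symmetric] by (rule cl_u_cong_noise) (simp add: w'_def)
  ultimately show "vec_square_integrable M (past k) (\<lambda>\<omega>. cl_u A B K (\<lambda>t. \<pi> t \<omega>) (x0 \<omega>) (\<lambda>t. w t \<omega>) k)"
    by simp
qed

lemma integral_noise_inner_past:
  assumes k: "k \<le> N" and Y: "vec_square_integrable M (past k) Y"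
  shows "integrable M (\<lambda>\<omega>. w k \<omega> \<bullet> Y \<omega>)" and "(\<integral>\<omega>. w k \<omega> \<bullet> Y \<omega> \<partial>M) = 0"
proof -
  have H: "subalgebra M (past k)" using k by (intro subalgebra_past) simp
  have wk: "square_integrable M M (\<lambda>\<omega>. w k \<omega> $ i)" for i
    using w_square_integrable[OF k] unfolding vec_square_integrable_def by blast
  have Yi: "square_integrable M (past k) (\<lambda>\<omega>. Y \<omega> $ i)" for i
    using Y unfolding vec_square_integrable_def by blast
  have Yi_M: "square_integrable M M (\<lambda>\<omega>. Y \<omega> $ i)" for i
    using Yi square_integrable_borel_measurable[OF H Yi] unfolding square_integrable_def by blast
  have component: "integrable M (\<lambda>\<omega>. w k \<omega> $ i * Y \<omega> $ i) \<and> (\<integral>\<omega>. w k \<omega> $ i * Y \<omega> $ i \<partial>M) = 0" for i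
  proof
    show "integrable M (\<lambda>\<omega>. w k \<omega> $ i * Y \<omega> $ i)"
      by (rule integrable_mult_square_integrable[OF subalgebra_refl wk Yi_M])
    have "Some k \<notin> insert None (Some ` {..<k})" "insert None (Some ` {..<k}) \<subseteq> insert None (Some ` {0..N})"
      using k by auto
    then have "(\<integral>\<omega>. w k \<omega> $ i * Y \<omega> $ i \<partial>M) = (\<integral>\<omega>. w k \<omega> $ i \<partial>M) * (\<integral>\<omega>. Y \<omega> $ i \<partial>M)"
      using integral_mult_indep_sigma_vars[OF indep_x0_w, of "Some k" "insert None (Some ` {..<k})"
          "\<lambda>v. v $ i" "\<lambda>\<omega>. Y \<omega> $ i"]
        k Yi square_integrable_integrable[OF subalgebra_refl wk] square_integrable_integrable[OF H Yi]
      unfolding square_integrable_def by auto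
    then show "(\<integral>\<omega>. w k \<omega> $ i * Y \<omega> $ i \<partial>M) = 0" using w_mean_zero[OF k] by simp
  qed
  show "integrable M (\<lambda>\<omega>. w k \<omega> \<bullet> Y \<omega>)" "(\<integral>\<omega>. w k \<omega> \<bullet> Y \<omega> \<partial>M) = 0"
    unfolding inner_vec_def using component by auto
qed


lemma stage_cost_0: "admissible M w N \<pi> \<Longrightarrow> \<omega> \<in> space M \<Longrightarrow> stage_cost \<pi> 0 \<omega> = 0"
  unfolding admissible_def stage_cost_def ek_def by simp

lemma cl_cost_eq_stage_costs:
  assumes adm: "admissible M w N \<pi>" and \<omega>: "\<omega> \<in> space M"
  defines "x \<equiv> cl_x A B (ricK A B Q R N) (\<lambda>t. \<pi> t \<omega>) (x0 \<omega>) (\<lambda>t. w t \<omega>)"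
    and "u \<equiv> cl_u A B (ricK A B Q R N) (\<lambda>t. \<pi> t \<omega>) (x0 \<omega>) (\<lambda>t. w t \<omega>)"
  shows "cl_cost A B (ricK A B Q R N) Q R \<theta> N (\<lambda>k. \<pi> k \<omega>) (x0 \<omega>) (\<lambda>k. w k \<omega>)
    = x0 \<omega> \<bullet> (ricS A B Q R N 0 *v x0 \<omega>) + (\<Sum>k\<in>{0..N}. w k \<omega> \<bullet> (ricS A B Q R N (Suc k) *v w k \<omega>))
      + (\<Sum>j\<in>{1..N}. stage_cost \<pi> j \<omega>)
      + (\<Sum>k\<in>{0..N}. 2 * (w k \<omega> \<bullet> (ricS A B Q R N (Suc k) *v (A *v x k + B *v u k))))"
proof -
  have "(\<Sum>j\<in>{0..N}. stage_cost \<pi> j \<omega>) = (\<Sum>j\<in>{1..N}. stage_cost \<pi> j \<omega>)"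
    using stage_cost_0[OF adm \<omega>] by (simp add: sum.atLeast_Suc_atMost)
  moreover have "cl_cost A B (ricK A B Q R N) Q R \<theta> N (\<lambda>k. \<pi> k \<omega>) (x0 \<omega>) (\<lambda>k. w k \<omega>)
    = x0 \<omega> \<bullet> (ricS A B Q R N 0 *v x0 \<omega>) + (\<Sum>j\<in>{0..N}. stage_cost \<pi> j \<omega>
        + w j \<omega> \<bullet> (ricS A B Q R N (Suc j) *v w j \<omega>)
        + 2 * (w j \<omega> \<bullet> (ricS A B Q R N (Suc j) *v (A *v x j + B *v u j))))"
    unfolding x_def u_def stage_cost_def ek_eq_est_error
    using admissible_le[OF adm _ \<omega>] by (subst cl_cost_decomposition[OF Q_psd R_pd]) (simp_all add: add.assoc)
  ultimately show ?thesis by (simp add: sum.distrib)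
qed

lemma chi_eq_cost_to_go:
  assumes adm: "admissible M w N \<pi>"
  shows "chi M A B Q R \<theta> N x0 w \<pi>
    = (\<integral>\<omega>. x0 \<omega> \<bullet> (ricS A B Q R N 0 *v x0 \<omega>) + (\<Sum>k\<in>{0..N}. w k \<omega> \<bullet> (ricS A B Q R N (Suc k) *v w k \<omega>)) \<partial>M)
      + cost_to_go \<pi> 1"
proof -
  let ?K = "ricK A B Q R N"
  define Y where "Y k \<omega> = ricS A B Q R N (Suc k) *v (A *v cl_x A B ?K (\<lambda>t. \<pi> t \<omega>) (x0 \<omega>) (\<lambda>t. w t \<omega>) k
    + B *v cl_u A B ?K (\<lambda>t. \<pi> t \<omega>) (x0 \<omega>) (\<lambda>t. w t \<omega>) k)" for k \<omega>
  define base where "base \<omega> = x0 \<omega> \<bullet> (ricS A B Q R N 0 *v x0 \<omega>)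
    + (\<Sum>k\<in>{0..N}. w k \<omega> \<bullet> (ricS A B Q R N (Suc k) *v w k \<omega>))" for \<omega>
  have Y: "vec_square_integrable M (past k) (Y k)" if "k \<le> N" for k
    unfolding Y_def using vec_square_integrable_past_state_input[OF adm that] subalgebra_past[of k] that
    by (intro vec_square_integrable_matrix_vector_mult vec_square_integrable_add) auto
  have cross: "integrable M (\<lambda>\<omega>. \<Sum>k\<in>{0..N}. 2 * (w k \<omega> \<bullet> Y k \<omega>))"
    "(\<integral>\<omega>. (\<Sum>k\<in>{0..N}. 2 * (w k \<omega> \<bullet> Y k \<omega>)) \<partial>M) = 0"
    using integral_noise_inner_past[OF _ Y] by (auto simp: Bochner_Integration.integral_sum)
  have "integrable M base"
    unfolding base_def using x0_square_integrable w_square_integrable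
    by (intro Bochner_Integration.integrable_add Bochner_Integration.integrable_sum integrable_quadratic_form) auto
  moreover have "integrable M (\<lambda>\<omega>. \<Sum>j\<in>{1..N}. stage_cost \<pi> j \<omega>)"
    using integrable_stage_cost[OF adm] by auto
  moreover have "chi M A B Q R \<theta> N x0 w \<pi>
      = (\<integral>\<omega>. base \<omega> + (\<Sum>j\<in>{1..N}. stage_cost \<pi> j \<omega>) + (\<Sum>k\<in>{0..N}. 2 * (w k \<omega> \<bullet> Y k \<omega>)) \<partial>M)"
    unfolding chi_def base_def Y_def
    by (rule Bochner_Integration.integral_cong[OF refl]) (rule cl_cost_eq_stage_costs[OF adm])
  ultimately show ?thesis
    unfolding cost_to_go_def base_def[symmetric] using cross by simp
qed

lemma integral_Vq_1_admissible:
  "admissible M w N \<pi> \<Longrightarrow> (\<integral>\<omega>. V 1 (\<pi> (1 - 1) \<omega>) \<omega> \<partial>M) = (\<integral>\<omega>. V 1 0 \<omega> \<partial>M)"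
  by (rule Bochner_Integration.integral_cong) (simp_all add: admissible_def)

lemma argmin_policy_optimal:
  assumes opt: "admissible M w N \<eta>" "argmin_policy M A B Q R \<theta> N w \<eta>" and adm: "admissible M w N \<pi>"
  shows "chi M A B Q R \<theta> N x0 w \<eta> \<le> chi M A B Q R \<theta> N x0 w \<pi>"
proof -
  have "cost_to_go \<eta> 1 = (\<integral>\<omega>. V 1 0 \<omega> \<partial>M)"
    using integral_Vq_eq_cost_to_go[OF opt, of 1] integral_Vq_1_admissible[OF opt(1)] by simp
  also have "\<dots> \<le> cost_to_go \<pi> 1"
    using integral_Vq_le_cost_to_go[OF adm, of 1] integral_Vq_1_admissible[OF adm] by simp
  finally show ?thesis unfolding chi_eq_cost_to_go[OF opt(1)] chi_eq_cost_to_go[OF adm] by simp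
qed

end

theorem theorem2:
  fixes M :: "'a measure"
    and A :: "real^'n^'n" and B :: "real^'m^'n"
    and m0 :: "real^'n" and M0 :: "real^'n^'n" and W :: "nat \<Rightarrow> real^'n^'n"
    and Q :: "nat \<Rightarrow> real^'n^'n" and R :: "nat \<Rightarrow> real^'m^'m" and \<theta> :: "nat \<Rightarrow> real"
    and N :: nat
    and x0 :: "'a \<Rightarrow> real^'n" and w :: "nat \<Rightarrow> 'a \<Rightarrow> real^'n"
  assumes "prob_space M"
    and "controllable A B"
    and "sym_psd M0" and "gaussian_vec M x0 m0 M0"
    and "\<And>k. k \<le> N \<Longrightarrow> sym_pd (W k)"
    and "\<And>k. k \<le> N \<Longrightarrow> gaussian_vec M (w k) 0 (W k)"
    and "prob_space.indep_vars M (\<lambda>_. borel) (case_option x0 w) (insert None (Some ` {0..N}))"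
    and "\<And>k. k \<le> Suc N \<Longrightarrow> sym_psd (Q k)"
    and "\<And>k. k \<le> N \<Longrightarrow> sym_pd (R k)"
  shows "(\<exists>eta. admissible M w N eta \<and> argmin_policy M A B Q R \<theta> N w eta)
       \<and> (\<forall>eta. admissible M w N eta \<and> argmin_policy M A B Q R \<theta> N w eta \<longrightarrow>
             (\<forall>\<pi>. admissible M w N \<pi> \<longrightarrow>
                  chi M A B Q R \<theta> N x0 w eta \<le> chi M A B Q R \<theta> N x0 w \<pi>))"
proof -
  interpret prob_space M by fact
  interpret queued_lqg M A B Q R \<theta> N x0 w
  proof
    show "vec_square_integrable M M x0"
      using assms(3,4) by (intro gaussian_vec_square_integrable) (auto intro: sym_psd_nonneg)
    show "vec_square_integrable M M (w k)" "(\<integral>\<omega>. w k \<omega> $ i \<partial>M) = 0" if "k \<le> N" for k i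
      using assms(5,6) that by (auto intro: gaussian_vec_square_integrable gaussian_vec_mean_zero sym_pd_nonneg)
  qed (use assms(7-9) in auto)
  show ?thesis
    using greedy_ages_admissible_argmin argmin_policy_optimal by blast
qed

end
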